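(* Let $m$ be a positive integer and let $\pm\theta_1,\pm\theta_2,\pm\theta_3$ be the roots of $q(x)=x^6-(m+5)x^4+(3m+5)x^2-1$ in its splitting field over $\mathbb{Q}$. In the double subdivided star $T_{2,m}$, let $c,d$ be the two pendant vertices of the subdivided star $SK_{1,2}$ part and $e,f$ their respective neighbours (the two degree-$2$ vertices adjacent to the coalescence vertex of $SK_{1,2}$). Then: (1) If $q(x)$ is irreducible over $\mathbb{Q}$, then $T_{2,m}$ has pretty good state transfer between $c$ and $d$ and between $e$ and $f$, with respect to a sequence in $(2\mathbb{Z}+1)\pi$. (2) Suppose $q(x)$ is reducible over $\mathbb{Q}$. If $\theta_1+\theta_2+\theta_3$ is an even integer, then $T_{2,m}$ has pretty good state transfer between $c$ and $d$ and between $e$ and $f$, with respect to a sequence in $(2\mathbb{Z}+1)\pi$. If $\theta_1+\theta_2+\theta_3$ is an odd integer, then there is no pretty good state transfer from any of the vertices $c,d,e,f$.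
   Context: A subdivided star $SK_{1,l}$ is obtained by identifying exactly one pendant (end) vertex from each of $l$ copies of the path $P_3$; the identified vertex is the coalescence vertex. The double subdivided star $T_{l,m}$ is obtained from $SK_{1,l}$ and $SK_{1,m}$ by adding one edge joining their two coalescence vertices. For a graph with adjacency matrix $A$, $U(t)=\exp(itA)$, $t\in\mathbb{R}$, and $\mathbf{e}_a$ is the standard basis vector of vertex $a$. Pretty good state transfer between distinct vertices $a,b$ means there exist real $\tau_k$ and $\gamma\in\mathbb{C}$ with $\lim_{k\to\infty}U(\tau_k)\mathbf{e}_a=\gamma\mathbf{e}_b$; "with respect to a sequence in $S$" means such $\tau_k$ can be chosen in $S$. When $q$ is reducible, it factors as $-f(x)f(-x)$ with $f$ an irreducible monic cubic, and $\theta_1,\theta_2,\theta_3$ denote the roots of $f$ (so $\theta_1+\theta_2+\theta_3$ is an integer). *)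

theory Defs
  imports Complex_Main "HOL-Computational_Algebra.Computational_Algebra"
begin

fun mat_pow :: "nat \<Rightarrow> (nat \<Rightarrow> nat \<Rightarrow> complex) \<Rightarrow> nat \<Rightarrow> nat \<Rightarrow> nat \<Rightarrow> complex" where
  "mat_pow n A 0 = (\<lambda>i j. if i = j then 1 else 0)"
| "mat_pow n A (Suc k) = (\<lambda>i j. \<Sum>l<n. mat_pow n A k i l * A l j)"

definition adj_mat :: "(nat \<Rightarrow> nat \<Rightarrow> bool) \<Rightarrow> nat \<Rightarrow> nat \<Rightarrow> complex" where
  "adj_mat E = (\<lambda>i j. if E i j then 1 else 0)"

(* U(t) = exp(i t A) = sum_k (i t)^k A^k / k!, entry (x,y) *)
definition transfer :: "nat \<Rightarrow> (nat \<Rightarrow> nat \<Rightarrow> bool) \<Rightarrow> real \<Rightarrow> nat \<Rightarrow> nat \<Rightarrow> complex" where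
  "transfer n E t x y = (\<Sum>k. ((\<i> * complex_of_real t) ^ k / of_nat (fact k)) * mat_pow n (adj_mat E) k x y)"

(* pretty good state transfer from a to b, with times taken from S:
   U(tau_k) e_a \<longrightarrow> gamma e_b, componentwise over the vertex set {0..<n} *)
definition pgst_wrt :: "nat \<Rightarrow> (nat \<Rightarrow> nat \<Rightarrow> bool) \<Rightarrow> real set \<Rightarrow> nat \<Rightarrow> nat \<Rightarrow> bool" where
  "pgst_wrt n E S a b \<longleftrightarrow> a \<noteq> b \<and> a < n \<and> b < n \<and>
     (\<exists>(\<tau>::nat \<Rightarrow> real) (\<gamma>::complex). (\<forall>k. \<tau> k \<in> S) \<and>
        (\<forall>x<n. (\<lambda>k. transfer n E (\<tau> k) x a) \<longlonglongrightarrow> (if x = b then \<gamma> else 0)))"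

definition pgst :: "nat \<Rightarrow> (nat \<Rightarrow> nat \<Rightarrow> bool) \<Rightarrow> nat \<Rightarrow> nat \<Rightarrow> bool" where
  "pgst n E a b \<longleftrightarrow> pgst_wrt n E UNIV a b"

definition odd_pi_multiples :: "real set" where
  "odd_pi_multiples = {real_of_int (2 * j + 1) * pi | j. True}"

(* Double subdivided star T_{2,m}, vertices {0..<2m+6}:
   0 = coalescence vertex of SK_{1,2}; 1 = e, 2 = f (its neighbours of degree 2);
   3 = c (pendant, adjacent to e), 4 = d (pendant, adjacent to f);
   5 = coalescence vertex of SK_{1,m} (adjacent to 0);
   6+i (i<m) = neighbours of vertex 5; 6+m+i = pendant vertex adjacent to 6+i. *)
definition T2_edge0 :: "nat \<Rightarrow> nat \<Rightarrow> nat \<Rightarrow> bool" where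
  "T2_edge0 m x y \<longleftrightarrow> (x = 0 \<and> y = 1) \<or> (x = 0 \<and> y = 2) \<or> (x = 1 \<and> y = 3) \<or> (x = 2 \<and> y = 4)
     \<or> (x = 0 \<and> y = 5) \<or> (\<exists>i<m. (x = 5 \<and> y = 6 + i) \<or> (x = 6 + i \<and> y = 6 + m + i))"

definition T2_edge :: "nat \<Rightarrow> nat \<Rightarrow> nat \<Rightarrow> bool" where
  "T2_edge m x y \<longleftrightarrow> T2_edge0 m x y \<or> T2_edge0 m y x"

definition T2_size :: "nat \<Rightarrow> nat" where
  "T2_size m = 2 * m + 6"

definition vc :: nat where "vc = 3"
definition vd :: nat where "vd = 4"
definition ve :: nat where "ve = 1"
definition vf :: nat where "vf = 2"

definition q_poly :: "nat \<Rightarrow> rat poly" where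
  "q_poly m = [:-1, 0, of_nat (3*m+5), 0, - of_nat (m+5), 0, 1:]"

end

(*
  Exchanging the branches c - e and d - f of SK(1,2) is an automorphism of T(2,m). The
  eigenvectors that matter for c and e are either antisymmetric under it, supported on
  {c, d, e, f} with eigenvalues 1 and -1, or symmetric, with the six roots +-theta_i of q as
  eigenvalues; e_c and e_e are combinations of these eight eigenvectors.

  If q is irreducible, theta_1, theta_2, theta_3 and 1 are linearly independent over the
  rationals, so Kronecker's theorem gives odd multiples tau of pi with exp(i tau theta_j) close
  to 1, while exp(+-i tau) = -1: at these times the walk started at c (resp. e) is close to
  its mirror image d (resp. f).

  If q = -f(x) f(-x), comparing coefficients shows that theta_1 + theta_2 + theta_3 is never
  an even integer. If it is odd, pairing eigenvectors for mu and -mu shows that a pretty good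
  state transfer from c, d, e or f could only go to the mirror vertex, with
  exp(i tau_k theta_j) --> gamma, exp(+-i tau_k) --> -gamma and gamma^2 = 1; but then
  gamma = gamma^3 = lim exp(i tau_k (theta_1 + theta_2 + theta_3)) = (-gamma)^odd = -gamma.
*)

theory Submission
  imports Defs "HOL-Analysis.Kronecker_Approximation_Theorem" "HOL-Computational_Algebra.Field_as_Ring"
begin

section \<open>Quantum walks and eigenvectors of the adjacency matrix\<close>

definition adj_eigenvector :: "nat \<Rightarrow> (nat \<Rightarrow> nat \<Rightarrow> bool) \<Rightarrow> complex \<Rightarrow> (nat \<Rightarrow> complex) \<Rightarrow> bool" where
  "adj_eigenvector n E c v \<longleftrightarrow> (\<forall>y<n. (\<Sum>l<n. adj_mat E y l * v l) = c * v y)"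

lemma sum_lessThan_delta_left:
  fixes f :: "nat \<Rightarrow> 'a::comm_ring_1"
  assumes "x < n"
  shows "(\<Sum>l<n. (if x = l then 1 else 0) * f l) = f x"
  using assms by (simp add: if_distrib[where f="\<lambda>a. a * _"] cong: if_cong)

lemma sum_lessThan_delta_right:
  fixes f :: "nat \<Rightarrow> 'a::comm_ring_1"
  assumes "x < n"
  shows "(\<Sum>l<n. f l * (if l = x then 1 else 0)) = f x"
  using assms by (simp add: if_distrib[where f="\<lambda>a. _ * a"] cong: if_cong)

lemma mat_pow_mult_eigenvector:
  assumes eig: "\<And>y. y < n \<Longrightarrow> (\<Sum>l<n. A y l * z l) = c * z y" and x: "x < n"
  shows "(\<Sum>l<n. mat_pow n A k x l * z l) = c ^ k * z x"
proof (induction k)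
  case 0
  show ?case using x by (simp add: sum_lessThan_delta_left)
next
  case (Suc k)
  have "(\<Sum>l<n. mat_pow n A (Suc k) x l * z l) = (\<Sum>p<n. mat_pow n A k x p * (\<Sum>l<n. A p l * z l))"
    by (simp add: sum_distrib_left sum_distrib_right mult.assoc) (rule sum.swap)
  also have "\<dots> = (\<Sum>p<n. mat_pow n A k x p * (c * z p))"
    by (intro sum.cong refl) (simp add: eig)
  also have "\<dots> = c * (\<Sum>p<n. mat_pow n A k x p * z p)"
    by (simp add: sum_distrib_left mult_ac)
  finally show ?case by (simp add: Suc.IH)
qed

lemma eigenvector_mult_mat_pow:
  assumes eig: "\<And>y. y < n \<Longrightarrow> (\<Sum>l<n. v l * A l y) = c * v y" and y: "y < n"
  shows "(\<Sum>l<n. v l * mat_pow n A k l y) = c ^ k * v y"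
  using y
proof (induction k arbitrary: y)
  case 0
  then show ?case by (simp add: sum_lessThan_delta_right)
next
  case (Suc k)
  have "(\<Sum>l<n. v l * mat_pow n A (Suc k) l y) = (\<Sum>p<n. (\<Sum>l<n. v l * mat_pow n A k l p) * A p y)"
    by (simp add: sum_distrib_left sum_distrib_right mult.assoc) (rule sum.swap)
  also have "\<dots> = c ^ k * (\<Sum>p<n. v p * A p y)"
    by (simp add: Suc.IH sum_distrib_left mult.assoc)
  finally show ?case by (simp add: eig Suc.prems)
qed

lemma norm_mat_pow_le:
  fixes A :: "nat \<Rightarrow> nat \<Rightarrow> complex"
  assumes "\<And>i j. norm (A i j) \<le> 1"
  shows "norm (mat_pow n A k i j) \<le> real n ^ k"
proof (induction k arbitrary: i j)
  case 0
  then show ?case by simp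
next
  case (Suc k)
  have "norm (mat_pow n A (Suc k) i j) \<le> (\<Sum>l<n. norm (mat_pow n A k i l) * norm (A l j))"
    by (simp add: order_trans[OF norm_sum] norm_mult)
  also have "\<dots> \<le> (\<Sum>l<n. real n ^ k * 1)"
    by (rule sum_mono, rule mult_mono[OF Suc.IH assms]) auto
  finally show ?case by simp
qed

lemma exp_series_mult_power:
  "(\<lambda>k. (\<i> * of_real t) ^ k / of_nat (fact k) * c ^ k) sums exp (\<i> * of_real t * c)"
proof -
  have "(\<i> * of_real t * c) ^ k /\<^sub>R fact k = (\<i> * of_real t) ^ k / of_nat (fact k) * c ^ k" for k
    by (simp add: scaleR_conv_of_real power_mult_distrib divide_inverse mult_ac)
  then show ?thesis
    using exp_converges[of "\<i> * of_real t * c"] by simp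
qed

lemma summable_transfer_series:
  "summable (\<lambda>k. (\<i> * of_real t) ^ k / of_nat (fact k) * mat_pow n (adj_mat E) k x y)"
proof (rule summable_comparison_test)
  have "norm ((\<i> * of_real t) ^ k / of_nat (fact k) * mat_pow n (adj_mat E) k x y)
          \<le> (\<bar>t\<bar> * real n) ^ k /\<^sub>R fact k" for k
  proof -
    have "norm ((\<i> * of_real t) ^ k / of_nat (fact k) * mat_pow n (adj_mat E) k x y)
        = \<bar>t\<bar> ^ k / fact k * norm (mat_pow n (adj_mat E) k x y)"
      by (simp add: norm_mult norm_divide norm_power)
    also have "\<dots> \<le> \<bar>t\<bar> ^ k / fact k * real n ^ k"
      by (intro mult_left_mono norm_mat_pow_le) (auto simp: adj_mat_def)
    also have "\<dots> = (\<bar>t\<bar> * real n) ^ k /\<^sub>R fact k"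
      by (simp add: power_mult_distrib divide_inverse mult_ac)
    finally show ?thesis .
  qed
  then show "\<exists>N. \<forall>k\<ge>N. norm ((\<i> * of_real t) ^ k / of_nat (fact k) * mat_pow n (adj_mat E) k x y)
          \<le> (\<bar>t\<bar> * real n) ^ k /\<^sub>R fact k"
    by blast
  show "summable (\<lambda>k. (\<bar>t\<bar> * real n) ^ k /\<^sub>R fact k)"
    using exp_converges sums_summable by blast
qed

lemma transfer_eigen_expansion:
  fixes z :: "'j \<Rightarrow> nat \<Rightarrow> complex" and lam :: "'j \<Rightarrow> complex"
  assumes "finite J" and a: "a < n" and x: "x < n"
    and eig: "\<And>j. j \<in> J \<Longrightarrow> adj_eigenvector n E (lam j) (z j)"
    and dec: "\<And>y. y < n \<Longrightarrow> (if y = a then 1 else 0) = (\<Sum>j\<in>J. z j y)"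
  shows "transfer n E t x a = (\<Sum>j\<in>J. exp (\<i> * of_real t * lam j) * z j x)"
proof -
  have "mat_pow n (adj_mat E) k x a
      = (\<Sum>l<n. mat_pow n (adj_mat E) k x l * (if l = a then 1 else 0))" for k
    by (simp add: sum_lessThan_delta_right a)
  also have "\<dots> k = (\<Sum>l<n. mat_pow n (adj_mat E) k x l * (\<Sum>j\<in>J. z j l))" for k
    by (intro sum.cong refl) (simp add: dec)
  also have "\<dots> k = (\<Sum>j\<in>J. \<Sum>l<n. mat_pow n (adj_mat E) k x l * z j l)" for k
    by (simp add: sum_distrib_left) (rule sum.swap)
  also have "\<dots> k = (\<Sum>j\<in>J. lam j ^ k * z j x)" for k
    using eig x by (intro sum.cong refl mat_pow_mult_eigenvector) (auto simp: adj_eigenvector_def)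
  finally have "(\<lambda>k. (\<i> * of_real t) ^ k / of_nat (fact k) * mat_pow n (adj_mat E) k x a)
      = (\<lambda>k. \<Sum>j\<in>J. (\<i> * of_real t) ^ k / of_nat (fact k) * lam j ^ k * z j x)"
    by (simp add: sum_distrib_left mult.assoc)
  moreover have "(\<lambda>k. \<Sum>j\<in>J. (\<i> * of_real t) ^ k / of_nat (fact k) * lam j ^ k * z j x)
      sums (\<Sum>j\<in>J. exp (\<i> * of_real t * lam j) * z j x)"
    by (intro sums_sum sums_mult2 exp_series_mult_power)
  ultimately show ?thesis
    unfolding transfer_def by (simp add: sums_iff)
qed

lemma transfer_left_eigenvector:
  assumes sym: "\<And>x y. E x y = E y x" and eig: "adj_eigenvector n E c v" and a: "a < n"
  shows "(\<Sum>x<n. v x * transfer n E t x a) = exp (\<i> * of_real t * c) * v a"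
proof -
  let ?f = "\<lambda>x k. (\<i> * of_real t) ^ k / of_nat (fact k) * mat_pow n (adj_mat E) k x a"
  have row: "(\<Sum>l<n. v l * adj_mat E l y) = c * v y" if "y < n" for y
  proof -
    have "(\<Sum>l<n. v l * adj_mat E l y) = (\<Sum>l<n. adj_mat E y l * v l)"
      by (intro sum.cong refl) (simp add: adj_mat_def sym[of y])
    then show ?thesis
      using eig that by (simp add: adj_eigenvector_def)
  qed
  have "(\<lambda>k. \<Sum>x<n. v x * ?f x k) sums (\<Sum>x<n. v x * transfer n E t x a)"
    unfolding transfer_def
    by (rule sums_sum, rule sums_mult, rule summable_sums, rule summable_transfer_series)
  moreover have "(\<Sum>x<n. v x * ?f x k) = (\<i> * of_real t) ^ k / of_nat (fact k) * c ^ k * v a" for k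
  proof -
    have "(\<Sum>x<n. v x * ?f x k)
        = (\<i> * of_real t) ^ k / of_nat (fact k) * (\<Sum>x<n. v x * mat_pow n (adj_mat E) k x a)"
      by (simp add: sum_distrib_left mult_ac)
    then show ?thesis
      by (simp add: eigenvector_mult_mat_pow[OF row a] mult.assoc)
  qed
  ultimately have "(\<lambda>k. (\<i> * of_real t) ^ k / of_nat (fact k) * c ^ k * v a)
      sums (\<Sum>x<n. v x * transfer n E t x a)"
    by simp
  moreover have "(\<lambda>k. (\<i> * of_real t) ^ k / of_nat (fact k) * c ^ k * v a)
      sums (exp (\<i> * of_real t * c) * v a)"
    by (rule sums_mult2[OF exp_series_mult_power])
  ultimately show ?thesis
    by (rule sums_unique2)
qed

lemma adj_eigenvector_scale:
  "adj_eigenvector n E c v \<Longrightarrow> adj_eigenvector n E c (\<lambda>x. k * v x)"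
  by (simp add: adj_eigenvector_def sum_distrib_left mult_ac flip: sum_distrib_left)

lemma adj_eigenvectors_orthogonal:
  assumes sym: "\<And>x y. E x y = E y x"
    and v: "adj_eigenvector n E c v" and w: "adj_eigenvector n E d w" and "c \<noteq> d"
  shows "(\<Sum>x<n. v x * w x) = 0"
proof -
  have "c * (\<Sum>x<n. v x * w x) = (\<Sum>x<n. (\<Sum>l<n. adj_mat E x l * v l) * w x)"
    using v by (simp add: adj_eigenvector_def sum_distrib_left mult.assoc)
  also have "\<dots> = (\<Sum>x<n. \<Sum>l<n. v l * (adj_mat E l x * w x))"
    by (simp add: sum_distrib_left sum_distrib_right adj_mat_def sym mult_ac)
  also have "\<dots> = (\<Sum>l<n. v l * (\<Sum>x<n. adj_mat E l x * w x))"
    by (simp add: sum_distrib_left) (rule sum.swap)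
  also have "\<dots> = d * (\<Sum>x<n. v x * w x)"
    using w by (simp add: adj_eigenvector_def sum_distrib_left mult_ac)
  finally show ?thesis
    using \<open>c \<noteq> d\<close> by simp
qed

lemma eigen_expansion_pendant_neighbour:
  fixes z :: "'j \<Rightarrow> nat \<Rightarrow> complex"
  assumes eig: "\<And>j. j \<in> J \<Longrightarrow> adj_eigenvector n E (lam j) (z j)"
    and dec: "\<And>y. y < n \<Longrightarrow> (if y = a then 1 else 0) = (\<Sum>j\<in>J. z j y)"
    and a: "a < n" and nb: "\<And>y. y < n \<Longrightarrow> adj_mat E y a = (if y = b then 1 else 0)"
    and y: "y < n"
  shows "(if y = b then 1 else 0) = (\<Sum>j\<in>J. lam j * z j y)"
proof -
  have "(if y = b then 1 else 0) = (\<Sum>l<n. adj_mat E y l * (if l = a then 1 else 0))"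
    using a y by (simp add: nb sum_lessThan_delta_right)
  also have "\<dots> = (\<Sum>l<n. adj_mat E y l * (\<Sum>j\<in>J. z j l))"
    by (intro sum.cong refl) (simp add: dec)
  also have "\<dots> = (\<Sum>j\<in>J. \<Sum>l<n. adj_mat E y l * z j l)"
    by (simp add: sum_distrib_left) (rule sum.swap)
  also have "\<dots> = (\<Sum>j\<in>J. lam j * z j y)"
    using eig y by (intro sum.cong refl) (simp add: adj_eigenvector_def)
  finally show ?thesis .
qed

lemma pgst_eigen_limit:
  assumes sym: "\<And>x y. E x y = E y x" and eig: "adj_eigenvector n E c v"
    and a: "a < n" and b: "b < n"
    and lim: "\<And>x. x < n \<Longrightarrow> (\<lambda>k. transfer n E (\<tau> k) x a) \<longlonglongrightarrow> (if x = b then \<gamma> else 0)"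
  shows "(\<lambda>k. exp (\<i> * of_real (\<tau> k) * c) * v a) \<longlonglongrightarrow> \<gamma> * v b"
proof -
  have "(\<lambda>k. \<Sum>x<n. v x * transfer n E (\<tau> k) x a) \<longlonglongrightarrow> (\<Sum>x<n. v x * (if x = b then \<gamma> else 0))"
    by (intro tendsto_sum tendsto_mult_left lim) simp
  moreover have "(\<Sum>x<n. v x * (if x = b then \<gamma> else 0)) = \<gamma> * v b"
    using b by (simp add: if_distrib[where f="\<lambda>a. _ * a"] cong: if_cong)
  ultimately show ?thesis
    by (simp add: transfer_left_eigenvector[OF sym eig a])
qed

lemma pgst_eigen_pair:
  assumes sym: "\<And>x y. E x y = E y x"
    and eig: "adj_eigenvector n E c v" "adj_eigenvector n E (- c) w"
    and a: "a < n" and b: "b < n"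
    and lim: "\<And>x. x < n \<Longrightarrow> (\<lambda>k. transfer n E (\<tau> k) x a) \<longlonglongrightarrow> (if x = b then \<gamma> else 0)"
  shows "v a * w a = \<gamma>\<^sup>2 * (v b * w b)"
proof -
  have "(\<lambda>k. (exp (\<i> * of_real (\<tau> k) * c) * v a) * (exp (\<i> * of_real (\<tau> k) * - c) * w a))
      \<longlonglongrightarrow> (\<gamma> * v b) * (\<gamma> * w b)"
    by (intro tendsto_mult pgst_eigen_limit[OF sym _ a b lim] eig)
  moreover have "(\<lambda>k. (exp (\<i> * of_real (\<tau> k) * c) * v a) * (exp (\<i> * of_real (\<tau> k) * - c) * w a))
      = (\<lambda>k. v a * w a)"
    by (simp add: mult_ac flip: exp_add)
  ultimately have "v a * w a = (\<gamma> * v b) * (\<gamma> * w b)"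
    by (simp add: LIMSEQ_const_iff)
  then show ?thesis
    by (simp add: power2_eq_square mult_ac)
qed

text \<open>The usual mechanism for pretty good state transfer: the phases of the eigencomponents of
  \<open>e\<^sub>a\<close> tend to \<open>1\<close>, except on a part \<open>Jm\<close> of the components, where they tend to \<open>-1\<close> and which
  sums to \<open>(e\<^sub>a - e\<^sub>b)/2\<close>; then \<open>U(\<tau>\<^sub>k) e\<^sub>a \<longrightarrow> e\<^sub>a - (e\<^sub>a - e\<^sub>b) = e\<^sub>b\<close>.\<close>

lemma pgst_wrt_of_eigen_expansion:
  fixes z :: "'j \<Rightarrow> nat \<Rightarrow> complex" and lam :: "'j \<Rightarrow> complex"
  assumes ab: "a \<noteq> b" "a < n" "b < n" and J: "finite J" "Jm \<subseteq> J"
    and eig: "\<And>j. j \<in> J \<Longrightarrow> adj_eigenvector n E (lam j) (z j)"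
    and dec: "\<And>y. y < n \<Longrightarrow> (if y = a then 1 else 0) = (\<Sum>j\<in>J. z j y)"
    and half: "\<And>y. y < n \<Longrightarrow> (\<Sum>j\<in>Jm. z j y) = ((if y = a then 1 else 0) - (if y = b then 1 else 0)) / 2"
    and \<tau>: "\<And>k. \<tau> k \<in> S"
    and lim: "\<And>j. j \<in> J \<Longrightarrow> (\<lambda>k. exp (\<i> * of_real (\<tau> k) * lam j)) \<longlonglongrightarrow> (if j \<in> Jm then -1 else 1)"
  shows "pgst_wrt n E S a b"
  unfolding pgst_wrt_def
proof (intro conjI exI allI impI)
  fix x
  assume x: "x < n"
  have "(\<lambda>k. \<Sum>j\<in>J. exp (\<i> * of_real (\<tau> k) * lam j) * z j x)
      \<longlonglongrightarrow> (\<Sum>j\<in>J. (if j \<in> Jm then -1 else 1) * z j x)"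
    by (intro tendsto_sum tendsto_mult_right lim)
  moreover have "(\<Sum>j\<in>J. (if j \<in> Jm then -1 else 1) * z j x) = (\<Sum>j\<in>J. z j x) - 2 * (\<Sum>j\<in>Jm. z j x)"
  proof -
    have "(\<Sum>j\<in>J. (if j \<in> Jm then -1 else 1) * z j x) = (\<Sum>j\<in>J. z j x - 2 * (if j \<in> Jm then z j x else 0))"
      by (intro sum.cong refl) simp
    also have "\<dots> = (\<Sum>j\<in>J. z j x) - 2 * (\<Sum>j\<in>J. if j \<in> Jm then z j x else 0)"
      by (simp add: sum_subtractf sum_distrib_left)
    also have "(\<Sum>j\<in>J. if j \<in> Jm then z j x else 0) = (\<Sum>j\<in>Jm. z j x)"
      using J by (simp add: sum.inter_restrict[symmetric] Int_absorb1)
    finally show ?thesis .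
  qed
  also have "\<dots> = (if x = b then 1 else 0)"
    unfolding half[OF x] dec[OF x, symmetric] by simp
  ultimately show "(\<lambda>k. transfer n E (\<tau> k) x a) \<longlonglongrightarrow> (if x = b then 1 else 0)"
    by (simp add: transfer_eigen_expansion[OF J(1) \<open>a < n\<close> x eig dec])
qed (use ab \<tau> in auto)

section \<open>Limits of phases and Kronecker's theorem\<close>

lemma exp_odd_pi_multiple:
  assumes "\<tau> \<in> odd_pi_multiples" and "s = 1 \<or> s = -1"
  shows "exp (\<i> * of_real \<tau> * s) = -1"
proof -
  obtain j :: int where "\<tau> = of_int (2 * j + 1) * pi"
    using assms(1) unfolding odd_pi_multiples_def by blast
  then have "exp (\<i> * of_real \<tau>) = -1"
    using exp_integer_2pi_plus1[of "of_int j"] by (simp add: algebra_simps)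
  then show ?thesis
    using assms(2) by (auto simp: exp_minus_inverse[symmetric] exp_minus)
qed

lemma tendsto_exp_phase_uminus:
  assumes "(\<lambda>k. exp (\<i> * of_real (\<tau> k) * x)) \<longlonglongrightarrow> 1"
  shows "(\<lambda>k. exp (\<i> * of_real (\<tau> k) * - x)) \<longlonglongrightarrow> 1"
proof -
  have "(\<lambda>k. inverse (exp (\<i> * of_real (\<tau> k) * x))) \<longlonglongrightarrow> inverse 1"
    by (intro tendsto_inverse assms) simp
  then show ?thesis
    by (simp add: exp_minus[symmetric])
qed

lemma odd_sum_exp_limits_contradiction:
  fixes \<theta>1 \<theta>2 \<theta>3 \<gamma> :: complex and N :: int
  assumes "(\<lambda>k. exp (\<i> * of_real (\<tau> k) * \<theta>1)) \<longlonglongrightarrow> \<gamma>"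
    and "(\<lambda>k. exp (\<i> * of_real (\<tau> k) * \<theta>2)) \<longlonglongrightarrow> \<gamma>"
    and "(\<lambda>k. exp (\<i> * of_real (\<tau> k) * \<theta>3)) \<longlonglongrightarrow> \<gamma>"
    and one: "(\<lambda>k. exp (\<i> * of_real (\<tau> k))) \<longlonglongrightarrow> - \<gamma>"
    and \<gamma>: "\<gamma>\<^sup>2 = 1" and "odd N" and sum: "\<theta>1 + \<theta>2 + \<theta>3 = of_int N"
  shows False
proof -
  have \<gamma>_odd_power: "\<gamma> powi N = \<gamma>"
  proof -
    obtain j where "N = 2 * j + 1"
      using \<open>odd N\<close> by (auto elim: oddE)
    moreover have "\<gamma> \<noteq> 0"
      using \<gamma> by auto
    ultimately show ?thesis
      using \<gamma> by (simp add: power_int_add power_int_mult)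
  qed
  have "exp (\<i> * of_real t * \<theta>1) * exp (\<i> * of_real t * \<theta>2) * exp (\<i> * of_real t * \<theta>3)
      = exp (\<i> * of_real t) powi N" for t
  proof -
    have "\<i> * of_real t * \<theta>1 + \<i> * of_real t * \<theta>2 + \<i> * of_real t * \<theta>3 = of_int N * (\<i> * of_real t)"
      by (simp add: sum flip: distrib_left)
    then show ?thesis
      by (simp add: exp_power_int flip: exp_add)
  qed
  moreover have "(\<lambda>k. exp (\<i> * of_real (\<tau> k) * \<theta>1) * exp (\<i> * of_real (\<tau> k) * \<theta>2)
      * exp (\<i> * of_real (\<tau> k) * \<theta>3)) \<longlonglongrightarrow> \<gamma> * \<gamma> * \<gamma>"
    by (intro tendsto_mult assms)
  ultimately have "(\<lambda>k. exp (\<i> * of_real (\<tau> k)) powi N) \<longlonglongrightarrow> \<gamma>"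
    using \<gamma> by (simp add: power2_eq_square)
  moreover have "(\<lambda>k. exp (\<i> * of_real (\<tau> k)) powi N) \<longlonglongrightarrow> (- \<gamma>) powi N"
    using \<gamma> by (intro tendsto_power_int one) auto
  ultimately have "\<gamma> = (- \<gamma>) powi N"
    by (rule LIMSEQ_unique)
  then show False
    using \<gamma> \<open>odd N\<close> \<gamma>_odd_power by auto
qed

lemma int_independent_with_one_inj_on:
  fixes \<theta> :: "nat \<Rightarrow> real"
  assumes indep: "\<And>l N. (\<Sum>i<n. of_int (l i) * \<theta> i) = of_int N \<Longrightarrow> \<forall>i<n. l i = 0"
  shows "inj_on (\<theta>(n := 1)) {..n}"
proof
  fix i j
  assume ij: "i \<in> {..n}" "j \<in> {..n}" "(\<theta>(n := 1)) i = (\<theta>(n := 1)) j"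
  show "i = j"
  proof (rule ccontr)
    assume "i \<noteq> j"
    with ij obtain p r where pr: "p < n" "r \<le> n" "p \<noteq> r" "(\<theta>(n := 1)) p = (\<theta>(n := 1)) r"
      by (metis atMost_iff le_neq_implies_less)
    define l :: "nat \<Rightarrow> int" where "l k = (if k = p then 1 else 0) - (if k = r then 1 else 0)" for k
    have "(\<Sum>k<n. of_int (l k) * \<theta> k)
        = (\<Sum>k<n. (if k = p then \<theta> k else 0) - (if k = r then \<theta> k else 0))"
      by (intro sum.cong refl) (auto simp: l_def)
    also have "\<dots> = \<theta> p - (if r < n then \<theta> r else 0)"
      using pr by (simp add: sum_subtractf)
    also have "\<dots> = of_int (if r < n then 0 else 1)"
      using pr by (auto split: if_splits)
    finally have "l p = 0"
      using indep pr by blast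
    then show False
      using pr by (simp add: l_def)
  qed
qed

lemma int_independent_with_one_module_independent:
  fixes \<theta> :: "nat \<Rightarrow> real"
  assumes indep: "\<And>l N. (\<Sum>i<n. of_int (l i) * \<theta> i) = of_int N \<Longrightarrow> \<forall>i<n. l i = 0"
  shows "module.independent (\<lambda>r x. of_int r * x) ((\<theta>(n := 1)) ` {..n})"
proof -
  interpret M: Modules.module "\<lambda>r x. of_int r * (x :: real)"
    by (simp add: Modules.module.intro distrib_left mult.commute)
  let ?\<theta> = "\<theta>(n := 1)"
  show "M.independent (?\<theta> ` {..n})"
    unfolding M.independent_explicit_module
  proof (intro allI impI)
    fix t u v
    assume t: "finite t" "t \<subseteq> ?\<theta> ` {..n}" and sum0: "(\<Sum>v\<in>t. of_int (u v) * v) = 0" and "v \<in> t"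
    define u' where "u' x = (if x \<in> t then u x else 0)" for x
    have "(\<Sum>i\<le>n. of_int (u' (?\<theta> i)) * ?\<theta> i) = (\<Sum>x\<in>?\<theta> ` {..n}. of_int (u' x) * x)"
      by (rule sum.reindex[OF int_independent_with_one_inj_on[OF indep], unfolded comp_def, symmetric])
    also have "\<dots> = (\<Sum>x\<in>t. of_int (u' x) * x)"
      using t by (intro sum.mono_neutral_right) (auto simp: u'_def)
    also have "\<dots> = 0"
      using sum0 by (simp add: u'_def)
    finally have rel: "(\<Sum>i<n. of_int (u' (\<theta> i)) * \<theta> i) = of_int (- u' 1)"
      by (simp add: lessThan_Suc_atMost[symmetric])
    then have u'_\<theta>: "\<forall>i<n. u' (\<theta> i) = 0"
      by (rule indep)
    with rel have "u' 1 = 0"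
      by simp
    obtain i where "i \<le> n" "v = ?\<theta> i"
      using t \<open>v \<in> t\<close> by (meson atMost_iff imageE subsetD)
    with u'_\<theta> \<open>u' 1 = 0\<close> have "u' v = 0"
      by (cases "i = n") auto
    then show "u v = 0"
      using \<open>v \<in> t\<close> by (simp add: u'_def)
  qed
qed

lemma kronecker_half_approximation:
  fixes \<theta> :: "nat \<Rightarrow> real"
  assumes indep: "\<And>l N. (\<Sum>i<n. of_int (l i) * \<theta> i) = of_int N \<Longrightarrow> \<forall>i<n. l i = 0" and "\<epsilon> > 0"
  obtains K M where "\<And>i. i < n \<Longrightarrow> \<bar>of_int K * \<theta> i - of_int (M i) + \<theta> i / 2\<bar> < \<epsilon>"
proof -
  obtain K M where "\<And>i. i < n \<Longrightarrow> \<bar>of_int K * (\<theta>(n := 1)) i - of_int (M i) - - (\<theta>(n := 1)) i / 2\<bar> < \<epsilon>"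
    by (rule Kronecker_thm_2[OF int_independent_with_one_module_independent[OF indep]
          int_independent_with_one_inj_on[OF indep], where \<alpha> = "\<lambda>i. - (\<theta>(n := 1)) i / 2"])
      (use \<open>\<epsilon> > 0\<close> in auto)
  then show ?thesis
    by (intro that[of K M]) auto
qed

text \<open>With \<open>\<tau> = (2K + 1)\<pi>\<close>, the phase \<open>\<tau> \<theta>\<^sub>i = 2\<pi> (K \<theta>\<^sub>i + \<theta>\<^sub>i/2)\<close> is close to the multiple
  \<open>2\<pi> M\<^sub>i\<close> of \<open>2\<pi>\<close>.\<close>

lemma kronecker_odd_pi_multiples:
  fixes \<theta> :: "nat \<Rightarrow> real"
  assumes indep: "\<And>l N. (\<Sum>i<n. of_int (l i) * \<theta> i) = of_int N \<Longrightarrow> \<forall>i<n. l i = 0"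
  obtains \<tau> where "\<And>k. \<tau> k \<in> odd_pi_multiples"
    and "\<And>i. i < n \<Longrightarrow> (\<lambda>k. exp (\<i> * of_real (\<tau> k) * of_real (\<theta> i))) \<longlonglongrightarrow> 1"
proof -
  have "\<exists>K M. \<forall>i<n. \<bar>of_int K * \<theta> i - of_int (M i) + \<theta> i / 2\<bar> < 1 / real (Suc j)" for j
    by (rule kronecker_half_approximation[OF indep, where \<epsilon> = "1 / real (Suc j)"]) auto
  then obtain K M where KM: "\<And>j i. i < n \<Longrightarrow> \<bar>of_int (K j) * \<theta> i - of_int (M j i) + \<theta> i / 2\<bar> < 1 / real (Suc j)"
    by metis
  define \<tau> where "\<tau> j = real_of_int (2 * K j + 1) * pi" for j
  show thesis
  proof (rule that)
    show "\<tau> k \<in> odd_pi_multiples" for k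
      unfolding \<tau>_def odd_pi_multiples_def by blast
    fix i
    assume i: "i < n"
    define d where "d j = of_int (K j) * \<theta> i - of_int (M j i) + \<theta> i / 2" for j
    have "d \<longlonglongrightarrow> 0"
      using KM[OF i] by (intro LIMSEQ_norm_0) (simp add: d_def)
    then have "(\<lambda>j. exp (\<i> * of_real (2 * pi * d j))) \<longlonglongrightarrow> exp (\<i> * of_real (2 * pi * 0))"
      by (intro tendsto_intros)
    moreover have "exp (\<i> * of_real (\<tau> j) * of_real (\<theta> i)) = exp (\<i> * of_real (2 * pi * d j))" for j
    proof -
      have "\<i> * of_real (\<tau> j) * of_real (\<theta> i) = \<i> * of_real (2 * pi * d j) + (2 * of_int (M j i) * pi) * \<i>"
        by (simp add: \<tau>_def d_def algebra_simps)
      moreover have "exp ((2 * of_int (M j i) * pi) * \<i>) = 1"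
        by (rule exp_integer_2pi) simp
      ultimately show ?thesis
        by (simp add: exp_add)
    qed
    ultimately show "(\<lambda>k. exp (\<i> * of_real (\<tau> k) * of_real (\<theta> i))) \<longlonglongrightarrow> 1"
      by simp
  qed
qed

lemma map_poly_of_rat_add:
  "map_poly (of_rat :: rat \<Rightarrow> 'a::field_char_0) (p + q) = map_poly of_rat p + map_poly of_rat q"
  by (rule poly_eqI) (simp add: coeff_map_poly of_rat_add)

lemma map_poly_of_rat_mult:
  "map_poly (of_rat :: rat \<Rightarrow> 'a::field_char_0) (p * q) = map_poly of_rat p * map_poly of_rat q"
  by (rule poly_eqI) (simp add: coeff_map_poly coeff_mult of_rat_sum of_rat_mult)

lemma map_poly_of_rat_uminus:
  "map_poly (of_rat :: rat \<Rightarrow> 'a::field_char_0) (- p) = - map_poly of_rat p"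
  by (rule poly_eqI) (simp add: coeff_map_poly of_rat_minus)

lemma irreducible_dvd_of_common_root:
  fixes p g :: "rat poly" and \<theta> :: "'a::field_char_0"
  assumes irr: "irreducible p" and p: "poly (map_poly of_rat p) \<theta> = 0" and g: "poly (map_poly of_rat g) \<theta> = 0"
  shows "p dvd g"
proof -
  define d where "d = gcd p g"
  have "fst (bezout_coefficients p g) * p + snd (bezout_coefficients p g) * g = d"
    unfolding d_def by (rule bezout_coefficients_fst_snd)
  then have d: "poly (map_poly of_rat d) \<theta> = 0"
    using p g by (metis map_poly_of_rat_add map_poly_of_rat_mult poly_add poly_mult mult_zero_right add_0)
  have "\<not> is_unit d"
  proof
    assume "is_unit d"
    then obtain c where "d = [:c:]" "c \<noteq> 0"
      by (metis is_unit_poly_iff one_neq_zero dvd_0_left)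
    then show False
      using d by (simp add: map_poly_pCons)
  qed
  moreover obtain h where "p = d * h"
    unfolding d_def by (metis dvdE gcd_dvd1)
  ultimately have "p dvd d"
    using irr by (metis irreducibleD dvd_mult_unit_iff dvd_refl)
  then show ?thesis
    unfolding d_def using dvd_trans gcd_dvd2 by blast
qed

lemma poly_eq_0_of_roots:
  fixes p :: "'a::idom poly"
  assumes "finite R" "degree p < card R" "\<And>x. x \<in> R \<Longrightarrow> poly p x = 0"
  shows "p = 0"
proof (rule ccontr)
  assume "p \<noteq> 0"
  then have "card R \<le> card {x. poly p x = 0}"
    using assms(3) by (intro card_mono poly_roots_finite) auto
  also have "\<dots> \<le> degree p"
    by (rule card_poly_roots_bound[OF \<open>p \<noteq> 0\<close>])
  finally show False
    using assms(2) by simp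
qed

lemma monic_cubic_eq:
  fixes f :: "'a::comm_ring_1 poly"
  assumes "lead_coeff f = 1" "degree f = 3"
  shows "f = [:coeff f 0, coeff f 1, coeff f 2, 1:]"
proof (rule poly_eqI)
  fix n
  show "coeff f n = coeff [:coeff f 0, coeff f 1, coeff f 2, 1:] n"
  proof (cases "n \<le> 3")
    case True
    then have "n = 0 \<or> n = 1 \<or> n = 2 \<or> n = 3" by auto
    then show ?thesis
      using assms by (auto simp: numeral_eq_Suc)
  next
    case False
    then show ?thesis
      using assms by (auto simp: coeff_eq_0 coeff_pCons split: nat.split)
  qed
qed

lemma cubic_vieta:
  fixes y1 y2 y3 b c d :: "'a::idom"
  assumes roots: "\<And>y. y \<in> {y1, y2, y3} \<Longrightarrow> y ^ 3 + b * y\<^sup>2 + c * y + d = 0"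
    and distinct: "y1 \<noteq> y2" "y1 \<noteq> y3" "y2 \<noteq> y3"
  shows "y1 + y2 + y3 = - b" "y1 * y2 * y3 = - d"
proof -
  define f where "f y = y ^ 3 + b * y\<^sup>2 + c * y + d" for y
  have f0: "f y1 = 0" "f y2 = 0" "f y3 = 0"
    using roots by (auto simp: f_def)
  have "(y1 - y2) * (y1\<^sup>2 + y1 * y2 + y2\<^sup>2 + b * (y1 + y2) + c) = f y1 - f y2"
    by (simp add: f_def algebra_simps power2_eq_square power3_eq_cube)
  then have q12: "y1\<^sup>2 + y1 * y2 + y2\<^sup>2 + b * (y1 + y2) + c = 0"
    using distinct f0 by simp
  have "(y1 - y3) * (y1\<^sup>2 + y1 * y3 + y3\<^sup>2 + b * (y1 + y3) + c) = f y1 - f y3"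
    by (simp add: f_def algebra_simps power2_eq_square power3_eq_cube)
  then have q13: "y1\<^sup>2 + y1 * y3 + y3\<^sup>2 + b * (y1 + y3) + c = 0"
    using distinct f0 by simp
  have "(y2 - y3) * (y1 + y2 + y3 + b)
      = (y1\<^sup>2 + y1 * y2 + y2\<^sup>2 + b * (y1 + y2) + c) - (y1\<^sup>2 + y1 * y3 + y3\<^sup>2 + b * (y1 + y3) + c)"
    by (simp add: algebra_simps power2_eq_square)
  then show sum: "y1 + y2 + y3 = - b"
    using distinct q12 q13 by (simp add: eq_neg_iff_add_eq_0)
  then have b: "b = - (y1 + y2 + y3)"
    by simp
  have "c = y1 * y2 + y1 * y3 + y2 * y3"
    using q12 unfolding b by (simp add: algebra_simps power2_eq_square eq_neg_iff_add_eq_0)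
  then have "f y1 = d + y1 * y2 * y3"
    unfolding f_def b by (simp add: algebra_simps power2_eq_square power3_eq_cube)
  then show "y1 * y2 * y3 = - d"
    using f0 by (simp add: eq_neg_iff_add_eq_0 add.commute)
qed

section \<open>The graph \<open>T\<^sub>2\<^sub>,\<^sub>m\<close>\<close>

lemma T2_edge_sym: "T2_edge m x y = T2_edge m y x"
  unfolding T2_edge_def by auto

lemma T2_edge0_iff:
  "T2_edge0 m x y \<longleftrightarrow> (x = 0 \<and> y = 1) \<or> (x = 0 \<and> y = 2) \<or> (x = 1 \<and> y = 3) \<or> (x = 2 \<and> y = 4)
     \<or> (x = 0 \<and> y = 5) \<or> (x = 5 \<and> 6 \<le> y \<and> y < 6 + m) \<or> (6 \<le> x \<and> x < 6 + m \<and> y = x + m)"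
proof -
  have "(\<exists>i<m. (x = 5 \<and> y = 6 + i) \<or> (x = 6 + i \<and> y = 6 + m + i)) \<longleftrightarrow>
        (x = 5 \<and> 6 \<le> y \<and> y < 6 + m) \<or> (6 \<le> x \<and> x < 6 + m \<and> y = x + m)"
  proof
    assume "(x = 5 \<and> 6 \<le> y \<and> y < 6 + m) \<or> (6 \<le> x \<and> x < 6 + m \<and> y = x + m)"
    then show "\<exists>i<m. (x = 5 \<and> y = 6 + i) \<or> (x = 6 + i \<and> y = 6 + m + i)"
    proof
      assume "x = 5 \<and> 6 \<le> y \<and> y < 6 + m"
      then show ?thesis by (intro exI[of _ "y - 6"]) auto
    next
      assume "6 \<le> x \<and> x < 6 + m \<and> y = x + m"
      then show ?thesis by (intro exI[of _ "x - 6"]) auto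
    qed
  qed auto
  then show ?thesis
    unfolding T2_edge0_def by simp
qed

definition T2_nbsum :: "nat \<Rightarrow> (nat \<Rightarrow> 'a::comm_monoid_add) \<Rightarrow> nat \<Rightarrow> 'a" where
  "T2_nbsum m g y =
    (if y = 0 then g 1 + g 2 + g 5 else if y = 1 then g 0 + g 3 else if y = 2 then g 0 + g 4
     else if y = 3 then g 1 else if y = 4 then g 2 else if y = 5 then g 0 + sum g {6..<6 + m}
     else if y < 6 + m then g 5 + g (y + m) else g (y - m))"

lemma T2_vertex_cases:
  assumes "y < T2_size m"
  obtains "y = 0" | "y = 1" | "y = 2" | "y = 3" | "y = 4" | "y = 5"
    | "6 \<le> y" "y < 6 + m" | "6 + m \<le> y" "y < 6 + 2 * m"
  using assms unfolding T2_size_def by linarith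

lemma T2_neighbours:
  assumes "y < T2_size m"
  shows "{l. l < T2_size m \<and> T2_edge m y l} =
    (if y = 0 then {1, 2, 5} else if y = 1 then {0, 3} else if y = 2 then {0, 4} else if y = 3 then {1}
     else if y = 4 then {2} else if y = 5 then insert 0 {6..<6 + m} else if y < 6 + m then {5, y + m}
     else {y - m})"
  using assms by (cases rule: T2_vertex_cases) (auto simp: T2_edge_def T2_edge0_iff T2_size_def)

lemma T2_adj_sum:
  assumes y: "y < T2_size m"
  shows "(\<Sum>l<T2_size m. adj_mat (T2_edge m) y l * g l) = T2_nbsum m g y"
proof -
  have "(\<Sum>l<T2_size m. adj_mat (T2_edge m) y l * g l) = (\<Sum>l<T2_size m. if T2_edge m y l then g l else 0)"
    by (intro sum.cong refl) (simp add: adj_mat_def)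
  also have "\<dots> = sum g {l. l < T2_size m \<and> T2_edge m y l}"
    by (simp add: sum.If_cases Collect_conj_eq lessThan_def)
  finally have nbrs: "(\<Sum>l<T2_size m. adj_mat (T2_edge m) y l * g l) = sum g {l. l < T2_size m \<and> T2_edge m y l}" .
  from y show ?thesis
    unfolding nbrs T2_neighbours[OF y] T2_nbsum_def by (cases rule: T2_vertex_cases) simp_all
qed

lemma T2_eigenvectorI:
  assumes "\<And>y. y < T2_size m \<Longrightarrow> T2_nbsum m v y = c * v y"
  shows "adj_eigenvector (T2_size m) (T2_edge m) c v"
  using assms by (simp add: adj_eigenvector_def T2_adj_sum)

lemma T2_sum_classes:
  fixes g :: "nat \<Rightarrow> 'a::comm_monoid_add"
  shows "(\<Sum>x<T2_size m. g x)
    = g 0 + g 1 + g 2 + g 3 + g 4 + g 5 + (\<Sum>i<m. g (6 + i)) + (\<Sum>i<m. g (6 + m + i))"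
proof -
  have "(\<Sum>x<T2_size m. g x) = sum g {..<6} + sum g {6..<6 + m} + sum g {6 + m..<6 + 2 * m}"
    by (simp add: T2_size_def lessThan_atLeast0 sum.atLeastLessThan_concat add.commute)
  moreover have "sum g {..<6} = g 0 + g 1 + g 2 + g 3 + g 4 + g 5"
    by (simp add: eval_nat_numeral lessThan_Suc add_ac)
  moreover have "sum g {6..<6 + m} = (\<Sum>i<m. g (6 + i))"
    by (simp add: sum.atLeastLessThan_shift_0[of g 6] atLeast0LessThan comp_def)
  moreover have "sum g {6 + m..<6 + 2 * m} = (\<Sum>i<m. g (6 + m + i))"
    by (simp add: sum.atLeastLessThan_shift_0[of g "6 + m"] atLeast0LessThan comp_def)
  ultimately show ?thesis
    by simp
qed

text \<open>Functions constant on the orbits of the automorphism group of \<open>T\<^sub>2\<^sub>,\<^sub>m\<close>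
  that fix the vertex \<open>0\<close>: \<open>{c, d}\<close>, \<open>{e, f}\<close>, \<open>{0}\<close>, \<open>{5}\<close>, the neighbours of \<open>5\<close>
  in \<open>SK\<^sub>1\<^sub>,\<^sub>m\<close>, and its pendant vertices.\<close>

definition T2_class_const :: "nat \<Rightarrow> (nat \<Rightarrow> 'a) \<Rightarrow> bool" where
  "T2_class_const m g \<longleftrightarrow> g 4 = g 3 \<and> g 2 = g 1 \<and> (\<forall>i<m. g (6 + i) = g 6 \<and> g (6 + m + i) = g (6 + m))"

lemma T2_class_const_mult:
  "T2_class_const m f \<Longrightarrow> T2_class_const m g \<Longrightarrow> T2_class_const m (\<lambda>x. f x * g x)"
  unfolding T2_class_const_def by simp

lemma T2_sum_class_const:
  fixes g :: "nat \<Rightarrow> 'a::comm_semiring_1"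
  assumes "T2_class_const m g"
  shows "(\<Sum>x<T2_size m. g x) = 2 * g 3 + 2 * g 1 + g 0 + g 5 + of_nat m * g 6 + of_nat m * g (6 + m)"
  using assms by (simp add: T2_sum_classes T2_class_const_def mult_2 add_ac)

definition antisym_vec :: "complex \<Rightarrow> nat \<Rightarrow> complex" where
  "antisym_vec s x = (if x = 3 then 1 else if x = 1 then s else if x = 4 then -1 else if x = 2 then - s else 0)"

lemma antisym_vec_eigenvector:
  assumes "s\<^sup>2 = 1"
  shows "adj_eigenvector (T2_size m) (T2_edge m) s (antisym_vec s)"
  using assms by (intro T2_eigenvectorI) (auto simp: T2_nbsum_def antisym_vec_def power2_eq_square)

section \<open>The polynomial \<open>q\<close>\<close>

definition q_root :: "nat \<Rightarrow> complex \<Rightarrow> bool" where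
  "q_root m \<mu> \<longleftrightarrow> \<mu> ^ 6 - (of_nat m + 5) * \<mu> ^ 4 + (3 * of_nat m + 5) * \<mu>\<^sup>2 - 1 = 0"

lemma q_root_uminus: "q_root m (- \<mu>) \<longleftrightarrow> q_root m \<mu>"
  unfolding q_root_def by (simp add: eval_nat_numeral)

lemma q_root_nonzero: "q_root m \<mu> \<Longrightarrow> \<mu> \<noteq> 0"
  unfolding q_root_def by auto

lemma q_root_square_ne_1:
  assumes "m > 0" "q_root m \<mu>"
  shows "\<mu>\<^sup>2 \<noteq> 1"
proof
  assume "\<mu>\<^sup>2 = 1"
  moreover have "\<mu> ^ 6 = (\<mu>\<^sup>2) ^ 3" "\<mu> ^ 4 = (\<mu>\<^sup>2)\<^sup>2"
    by (simp_all flip: power_mult)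
  ultimately have "2 * of_nat m = (0 :: complex)"
    using assms(2) unfolding q_root_def by (simp add: algebra_simps)
  then show False
    using assms(1) by simp
qed

lemma poly_q_poly:
  "poly (map_poly (of_rat :: rat \<Rightarrow> 'a::field_char_0) (q_poly m)) x
     = x ^ 6 - (of_nat m + 5) * x ^ 4 + (3 * of_nat m + 5) * x\<^sup>2 - 1"
  unfolding q_poly_def
  by (simp add: map_poly_pCons of_rat_minus of_rat_diff of_rat_add of_rat_mult algebra_simps eval_nat_numeral)

lemma q_root_iff_poly: "q_root m \<mu> \<longleftrightarrow> poly (map_poly of_rat (q_poly m)) \<mu> = 0"
  unfolding q_root_def poly_q_poly ..

lemma q_root_of_real_iff: "q_root m (of_real x) \<longleftrightarrow> poly (map_poly of_rat (q_poly m)) x = 0"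
proof -
  have "of_real (poly (map_poly of_rat (q_poly m)) x) = poly (map_poly of_rat (q_poly m)) (of_real x :: complex)"
    by (simp add: poly_q_poly)
  then show ?thesis
    by (metis q_root_iff_poly of_real_eq_0_iff)
qed

lemma q_cubic_roots:
  assumes m: "m > 0"
  obtains y1 y2 y3 :: real
  where "0 < y1" "y1 < 1" "1 < y2" "y2 < 3" "3 < y3"
    and "\<And>y. y \<in> {y1, y2, y3} \<Longrightarrow> y ^ 3 - (real m + 5) * y\<^sup>2 + (3 * real m + 5) * y - 1 = 0"
proof -
  define p where "p y = y ^ 3 - (real m + 5) * y\<^sup>2 + (3 * real m + 5) * y - 1" for y
  have cont: "continuous_on S p" for S
    unfolding p_def by (intro continuous_intros)
  have p0: "p 0 = -1" and p1: "p 1 = 2 * real m" and p3: "p 3 = -4"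
    and pM: "p (real m + 5) = (3 * real m + 5) * (real m + 5) - 1"
    by (simp_all add: p_def algebra_simps power2_eq_square power3_eq_cube)
  obtain y1 where y1: "0 \<le> y1" "y1 \<le> 1" "p y1 = 0"
    using IVT'[of p 0 0 1, OF _ _ _ cont] p0 p1 by auto
  obtain y2 where y2: "1 \<le> y2" "y2 \<le> 3" "p y2 = 0"
    using IVT2'[of p 3 0 1, OF _ _ _ cont] p1 p3 by auto
  obtain y3 where y3: "3 \<le> y3" "y3 \<le> real m + 5" "p y3 = 0"
    using IVT'[of p 3 0 "real m + 5", OF _ _ _ cont] p3 pM by (auto simp: algebra_simps)
  show ?thesis
    by (rule that[of y1 y2 y3]) (use y1 y2 y3 p0 p1 p3 m in \<open>auto simp: order.order_iff_strict p_def\<close>)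
qed

text \<open>The roots of \<open>q(x)\<close> are \<open>\<plusminus>\<surd>y\<^sub>i\<close> for the three roots \<open>y\<^sub>i\<close> of the cubic \<open>q(\<surd>y)\<close>.\<close>

lemma q_real_roots:
  assumes m: "m > 0"
  obtains \<theta>1 \<theta>2 \<theta>3 :: real
  where "0 < \<theta>1" "\<theta>1 < 1" "1 < \<theta>2" "\<theta>2 < \<theta>3"
    and "\<And>x. x \<in> {\<theta>1, \<theta>2, \<theta>3} \<Longrightarrow> poly (map_poly of_rat (q_poly m)) x = 0"
    and "\<theta>1\<^sup>2 + \<theta>2\<^sup>2 + \<theta>3\<^sup>2 = real m + 5" "\<theta>1 * \<theta>2 * \<theta>3 = 1"
proof -
  obtain y1 y2 y3 :: real where y: "0 < y1" "y1 < 1" "1 < y2" "y2 < 3" "3 < y3"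
    and roots: "\<And>y. y \<in> {y1, y2, y3} \<Longrightarrow> y ^ 3 - (real m + 5) * y\<^sup>2 + (3 * real m + 5) * y - 1 = 0"
    using q_cubic_roots[OF m] by blast
  have "y ^ 3 + - (real m + 5) * y\<^sup>2 + (3 * real m + 5) * y + - 1 = 0" if "y \<in> {y1, y2, y3}" for y
    using roots[OF that] by (simp add: algebra_simps)
  from cubic_vieta[OF this] y have vieta: "y1 + y2 + y3 = real m + 5" "y1 * y2 * y3 = 1"
    by simp_all
  show ?thesis
  proof (rule that[of "sqrt y1" "sqrt y2" "sqrt y3"])
    show "0 < sqrt y1" "sqrt y1 < 1" "1 < sqrt y2" "sqrt y2 < sqrt y3"
      using y by simp_all
    show "(sqrt y1)\<^sup>2 + (sqrt y2)\<^sup>2 + (sqrt y3)\<^sup>2 = real m + 5" "sqrt y1 * sqrt y2 * sqrt y3 = 1"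
      using y vieta by (simp_all flip: real_sqrt_mult)
    fix x
    assume "x \<in> {sqrt y1, sqrt y2, sqrt y3}"
    then have "x\<^sup>2 \<in> {y1, y2, y3}"
      using y by auto
    from roots[OF this] show "poly (map_poly of_rat (q_poly m)) x = 0"
      by (simp add: poly_q_poly flip: power_mult)
  qed
qed

lemma q_poly_sextic_multiple:
  fixes G :: "rat poly" and \<theta> :: "'a::field_char_0"
  assumes irr: "irreducible (q_poly m)" and q: "poly (map_poly of_rat (q_poly m)) \<theta> = 0"
    and G: "degree G \<le> 6" "poly (map_poly of_rat G) \<theta> = 0"
  shows "coeff G 6 + coeff G 0 = 0"
proof -
  have q6: "degree (q_poly m) = 6" "coeff (q_poly m) 6 = 1" "coeff (q_poly m) 0 = -1"
    unfolding q_poly_def by (simp_all add: eval_nat_numeral)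
  obtain r where r: "G = q_poly m * r"
    using irreducible_dvd_of_common_root[OF irr q G(2)] by (elim dvdE)
  show ?thesis
  proof (cases "r = 0")
    case True
    then show ?thesis
      by (simp add: r)
  next
    case False
    moreover have "q_poly m \<noteq> 0"
      using q6 by auto
    ultimately have "degree G = 6 + degree r"
      using q6 by (simp add: r degree_mult_eq)
    then obtain c where "r = [:c:]"
      using G(1) by (metis add_le_same_cancel1 le_zero_eq degree_eq_zeroE)
    then show ?thesis
      using q6 by (simp add: r)
  qed
qed

lemma int_sum_square_products_eq_0:
  fixes l1 l2 l3 :: int
  assumes "(l1\<^sup>2 + l2\<^sup>2) * (l1\<^sup>2 + l3\<^sup>2) + (l2\<^sup>2 + l3\<^sup>2)\<^sup>2 = 0"
  shows "l1 = 0 \<and> l2 = 0 \<and> l3 = 0"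
proof -
  have "(l1\<^sup>2 + l2\<^sup>2) * (l1\<^sup>2 + l3\<^sup>2) \<ge> 0"
    by simp
  with assms have "l2\<^sup>2 + l3\<^sup>2 = 0" "(l1\<^sup>2 + l2\<^sup>2) * (l1\<^sup>2 + l3\<^sup>2) = 0"
    by (smt (verit) zero_le_power2 power_eq_0_iff)+
  then show ?thesis
    by auto
qed

text \<open>Put \<open>u = N - l\<^sub>1\<theta>\<^sub>1 = l\<^sub>2\<theta>\<^sub>2 + l\<^sub>3\<theta>\<^sub>3\<close>. Using \<open>\<theta>\<^sub>1\<theta>\<^sub>2\<theta>\<^sub>3 = 1\<close> and the value of
  \<open>\<theta>\<^sub>2\<^sup>2 + \<theta>\<^sub>3\<^sup>2\<close>, the cubics \<open>W\<^sub>2 = \<theta>\<^sub>1 u\<^sup>2 - 2 l\<^sub>2 l\<^sub>3 - l\<^sub>2\<^sup>2 \<theta>\<^sub>1 (\<theta>\<^sub>2\<^sup>2 + \<theta>\<^sub>3\<^sup>2)\<close> and \<open>W\<^sub>3\<close> (with \<open>l\<^sub>3\<close>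
  in place of \<open>l\<^sub>2\<close>) in \<open>\<theta>\<^sub>1\<close> equal \<open>\<theta>\<^sub>1\<theta>\<^sub>3\<^sup>2 (l\<^sub>3\<^sup>2 - l\<^sub>2\<^sup>2)\<close> and \<open>\<theta>\<^sub>1\<theta>\<^sub>2\<^sup>2 (l\<^sub>2\<^sup>2 - l\<^sub>3\<^sup>2)\<close>, so
  \<open>W\<^sub>2 W\<^sub>3 + (l\<^sub>2\<^sup>2 - l\<^sub>3\<^sup>2)\<^sup>2\<close> is a rational sextic vanishing at \<open>\<theta>\<^sub>1\<close>. As a multiple of \<open>q\<close> it has opposite
  leading and constant coefficients, i.e. \<open>(l\<^sub>1\<^sup>2 + l\<^sub>2\<^sup>2)(l\<^sub>1\<^sup>2 + l\<^sub>3\<^sup>2) + (l\<^sub>2\<^sup>2 + l\<^sub>3\<^sup>2)\<^sup>2 = 0\<close>.\<close>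

lemma q_roots_int_independent:
  fixes \<theta>1 \<theta>2 \<theta>3 :: real and l1 l2 l3 N :: int
  assumes irr: "irreducible (q_poly m)" and q1: "poly (map_poly of_rat (q_poly m)) \<theta>1 = 0"
    and s23: "\<theta>2\<^sup>2 + \<theta>3\<^sup>2 = real m + 5 - \<theta>1\<^sup>2" and prod: "\<theta>1 * \<theta>2 * \<theta>3 = 1"
    and rel: "of_int l1 * \<theta>1 + of_int l2 * \<theta>2 + of_int l3 * \<theta>3 = of_int N"
  shows "l1 = 0 \<and> l2 = 0 \<and> l3 = 0"
proof -
  define W :: "int \<Rightarrow> rat poly" where
    "W l = [:of_int (-2 * l2 * l3), of_int (N\<^sup>2 - l\<^sup>2 * (int m + 5)), of_int (-2 * N * l1), of_int (l1\<^sup>2 + l\<^sup>2):]" for l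
  define G where "G = W l2 * W l3 + [:of_int ((l2\<^sup>2 - l3\<^sup>2)\<^sup>2):]"
  have W_eval: "poly (map_poly of_rat (W l)) \<theta>1
      = \<theta>1 * (of_int N - of_int l1 * \<theta>1)\<^sup>2 - 2 * of_int l2 * of_int l3 - (of_int l)\<^sup>2 * \<theta>1 * (real m + 5 - \<theta>1\<^sup>2)" for l
    by (simp add: W_def map_poly_pCons of_rat_minus of_rat_mult of_rat_add of_rat_diff of_rat_of_int_eq
        algebra_simps power2_eq_square power3_eq_cube)
  have u: "of_int N - of_int l1 * \<theta>1 = of_int l2 * \<theta>2 + of_int l3 * \<theta>3"
    using rel by simp
  have W2: "poly (map_poly of_rat (W l2)) \<theta>1 = \<theta>1 * \<theta>3\<^sup>2 * ((of_int l3)\<^sup>2 - (of_int l2)\<^sup>2)"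
    unfolding W_eval u s23[symmetric] using prod by (simp add: algebra_simps power2_eq_square)
  have W3: "poly (map_poly of_rat (W l3)) \<theta>1 = \<theta>1 * \<theta>2\<^sup>2 * ((of_int l2)\<^sup>2 - (of_int l3)\<^sup>2)"
    unfolding W_eval u s23[symmetric] using prod by (simp add: algebra_simps power2_eq_square)
  have "poly (map_poly of_rat G) \<theta>1 = - ((\<theta>1 * \<theta>2 * \<theta>3)\<^sup>2 - 1) * ((of_int l2)\<^sup>2 - (of_int l3)\<^sup>2)\<^sup>2"
    unfolding G_def map_poly_of_rat_add map_poly_of_rat_mult poly_add poly_mult W2 W3
    by (simp add: map_poly_pCons of_rat_mult of_rat_add of_rat_diff of_rat_of_int_eq algebra_simps power2_eq_square)
  then have "poly (map_poly of_rat G) \<theta>1 = 0"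
    by (simp add: prod)
  moreover have "degree G \<le> 6"
  proof -
    have "degree (W l) \<le> 3" for l
      unfolding W_def by (rule degree_le) (simp add: coeff_pCons split: nat.split)
    then have "degree (W l2 * W l3) \<le> 6"
      by (metis order.trans[OF degree_mult_le] add_mono numeral_Bit0 numeral_Bit1 numeral_One)
    then show ?thesis
      unfolding G_def by (intro degree_add_le) simp_all
  qed
  ultimately have "coeff G 6 + coeff G 0 = 0"
    by (intro q_poly_sextic_multiple[OF irr q1])
  moreover have "coeff G 6 = of_int ((l1\<^sup>2 + l2\<^sup>2) * (l1\<^sup>2 + l3\<^sup>2))"
    by (simp add: G_def W_def coeff_mult eval_nat_numeral atMost_Suc)
  moreover have "coeff G 0 = of_int ((-2 * l2 * l3)\<^sup>2 + (l2\<^sup>2 - l3\<^sup>2)\<^sup>2)"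
    by (simp add: G_def W_def power2_eq_square)
  ultimately have "(of_int ((l1\<^sup>2 + l2\<^sup>2) * (l1\<^sup>2 + l3\<^sup>2) + (l2\<^sup>2 + l3\<^sup>2)\<^sup>2) :: rat) = 0"
    by (simp add: algebra_simps power2_eq_square)
  then have "(l1\<^sup>2 + l2\<^sup>2) * (l1\<^sup>2 + l3\<^sup>2) + (l2\<^sup>2 + l3\<^sup>2)\<^sup>2 = 0"
    by (simp only: of_int_eq_0_iff)
  then show ?thesis
    by (rule int_sum_square_products_eq_0)
qed

lemma q_irreducible_kronecker_phases:
  assumes m: "m > 0" and irr: "irreducible (q_poly m)"
  obtains \<theta>1 \<theta>2 \<theta>3 :: real and \<tau> where "0 < \<theta>1" "\<theta>1 < 1" "1 < \<theta>2" "\<theta>2 < \<theta>3"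
    and "\<And>x. x \<in> {\<theta>1, \<theta>2, \<theta>3} \<Longrightarrow> poly (map_poly of_rat (q_poly m)) x = 0"
    and "\<And>k. \<tau> k \<in> odd_pi_multiples"
    and "\<And>x. x \<in> {\<theta>1, \<theta>2, \<theta>3} \<Longrightarrow> (\<lambda>k. exp (\<i> * of_real (\<tau> k) * of_real x)) \<longlonglongrightarrow> 1"
proof -
  obtain \<theta>1 \<theta>2 \<theta>3 :: real where \<theta>: "0 < \<theta>1" "\<theta>1 < 1" "1 < \<theta>2" "\<theta>2 < \<theta>3"
    and roots: "\<And>x. x \<in> {\<theta>1, \<theta>2, \<theta>3} \<Longrightarrow> poly (map_poly of_rat (q_poly m)) x = 0"
    and sumsq: "\<theta>1\<^sup>2 + \<theta>2\<^sup>2 + \<theta>3\<^sup>2 = real m + 5" and prod: "\<theta>1 * \<theta>2 * \<theta>3 = 1"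
    using q_real_roots[OF m] by blast
  define \<theta> :: "nat \<Rightarrow> real" where "\<theta> i = (if i = 0 then \<theta>1 else if i = 1 then \<theta>2 else \<theta>3)" for i
  have "\<forall>i<3. l i = 0" if "(\<Sum>i<3. of_int (l i) * \<theta> i) = of_int N" for l N
  proof -
    have "of_int (l 0) * \<theta>1 + of_int (l 1) * \<theta>2 + of_int (l 2) * \<theta>3 = of_int N"
      using that by (simp add: \<theta>_def eval_nat_numeral lessThan_Suc add_ac)
    then have "l 0 = 0 \<and> l 1 = 0 \<and> l 2 = 0"
      using roots sumsq prod by (intro q_roots_int_independent[OF irr]) auto
    then show ?thesis
      by (auto simp: eval_nat_numeral less_Suc_eq)
  qed
  then obtain \<tau> where \<tau>: "\<And>k. \<tau> k \<in> odd_pi_multiples"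
    and lim: "\<And>i. i < 3 \<Longrightarrow> (\<lambda>k. exp (\<i> * of_real (\<tau> k) * of_real (\<theta> i))) \<longlonglongrightarrow> 1"
    using kronecker_odd_pi_multiples[where \<theta> = \<theta> and n = 3] by blast
  show ?thesis
    by (rule that[OF \<theta> roots \<tau>]) (use lim[of 0] lim[of 1] lim[of 2] in \<open>auto simp: \<theta>_def\<close>)
qed

lemma q_root_of_factor_root:
  assumes "q_poly m = - (f * g)" and "poly (map_poly of_rat f) \<theta> = 0"
  shows "q_root m \<theta>"
  using assms by (simp add: q_root_iff_poly map_poly_of_rat_mult map_poly_of_rat_uminus)

lemma square_plus_4_not_multiple_of_16:
  fixes w t :: int
  shows "w\<^sup>2 + 4 \<noteq> 16 * t"
proof
  assume w: "w\<^sup>2 + 4 = 16 * t"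
  show False
  proof (cases "even w")
    case True
    then obtain z where "w = 2 * z"
      by (elim evenE)
    with w have z: "z\<^sup>2 + 1 = 4 * t"
      by (simp add: power2_eq_square)
    show False
    proof (cases "even z")
      case True
      then obtain y where "z = 2 * y"
        by (elim evenE)
      with z have "4 * (t - y\<^sup>2) = 1"
        by (simp add: power2_eq_square algebra_simps)
      then show False
        by presburger
    next
      case False
      then obtain y where "z = 2 * y + 1"
        by (elim oddE)
      with z have "4 * (t - y\<^sup>2 - y) = 2"
        by (simp add: power2_eq_square algebra_simps)
      then show False
        by presburger
    qed
  next
    case False
    then obtain z where "w = 2 * z + 1"
      by (elim oddE)
    with w have "16 * t - 4 * z\<^sup>2 - 4 * z = 5"
      by (simp add: power2_eq_square algebra_simps)
    then show False
      by presburger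
  qed
qed

text \<open>Comparing coefficients in \<open>q = - f(x) f(-x)\<close> for \<open>f = x\<^sup>3 + a\<^sub>2 x\<^sup>2 + a\<^sub>1 x + a\<^sub>0\<close> shows that
  \<open>a\<^sub>2 = -(\<theta>\<^sub>1 + \<theta>\<^sub>2 + \<theta>\<^sub>3)\<close> is never an even integer: the even case of the theorem is vacuous.\<close>

lemma q_poly_cubic_factor_coeff_not_even:
  fixes a0 a1 a2 :: rat and k :: int
  assumes "q_poly m = - ([:a0, a1, a2, 1:] * pcompose [:a0, a1, a2, 1:] [:0, -1:])"
  shows "a2 \<noteq> of_int (2 * k)"
proof
  assume a2: "a2 = of_int (2 * k)"
  have e0: "a0 * a0 = 1" and e1: "2 * a1 - a2 * a2 = - (of_nat m + 5)"
    and e2: "a1 * a1 - 2 * a0 * a2 = 3 * of_nat m + 5"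
    using assms unfolding q_poly_def by (simp_all add: pcompose_pCons algebra_simps)
  obtain s :: int where s: "a0 = of_int s"
    using e0 by (metis square_eq_1_iff of_int_1 of_int_minus)
  define u where "u = 4 * k\<^sup>2 - int m - 5"
  have a1: "a1 = of_int u / 2"
    using e1 a2 unfolding u_def by (simp add: field_simps power2_eq_square)
  have "of_int (u * u) = (of_int (4 * (3 * int m + 5) + 16 * s * k) :: rat)"
    using e2 a1 a2 s by (simp add: field_simps)
  then have "u * u = 4 * (3 * int m + 5) + 16 * s * k"
    by (simp only: of_int_eq_iff)
  then have "(u + 6)\<^sup>2 + 4 = 16 * (3 * k\<^sup>2 + s * k)"
    unfolding u_def by (simp add: power2_eq_square algebra_simps)
  then show False
    by (rule square_plus_4_not_multiple_of_16[THEN notE])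
qed

lemma q_poly_cubic_factor_roots:
  fixes f :: "rat poly" and \<theta>1 \<theta>2 \<theta>3 :: complex
  assumes f: "lead_coeff f = 1" "degree f = 3" and qf: "q_poly m = - (f * pcompose f [:0, -1:])"
    and roots: "map_poly of_rat f = [:-\<theta>1, 1:] * [:-\<theta>2, 1:] * [:-\<theta>3, 1:]"
  shows "q_root m \<theta>1" "q_root m \<theta>2" "q_root m \<theta>3" "\<theta>1 + \<theta>2 + \<theta>3 \<noteq> of_int (2 * k)"
proof -
  have "poly (map_poly of_rat f) \<theta> = 0" if "\<theta> \<in> {\<theta>1, \<theta>2, \<theta>3}" for \<theta>
    using that unfolding roots poly_mult by auto
  then show "q_root m \<theta>1" "q_root m \<theta>2" "q_root m \<theta>3"
    by (auto intro: q_root_of_factor_root[OF qf])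
  define a0 a1 a2 where "a0 = coeff f 0" and "a1 = coeff f 1" and "a2 = coeff f 2"
  have f_eq: "f = [:a0, a1, a2, 1:]"
    unfolding a0_def a1_def a2_def by (rule monic_cubic_eq[OF f])
  have "[:of_rat a0, of_rat a1, of_rat a2, 1:] = [:-\<theta>1, 1:] * [:-\<theta>2, 1:] * [:-\<theta>3, 1:]"
    using roots unfolding f_eq by (simp add: map_poly_pCons)
  then have "of_rat a2 = - (\<theta>1 + \<theta>2 + \<theta>3)"
    by (simp add: algebra_simps)
  moreover have "a2 \<noteq> of_int (2 * - k)"
    using qf unfolding f_eq by (rule q_poly_cubic_factor_coeff_not_even)
  ultimately show "\<theta>1 + \<theta>2 + \<theta>3 \<noteq> of_int (2 * k)"
    by (metis minus_minus of_int_minus mult_minus_right of_rat_eq_iff of_rat_of_int_eq)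
qed

section \<open>Symmetric eigenvectors\<close>

text \<open>The entries of \<open>sym_vec m \<mu>\<close> are obtained by solving the eigenvalue equations from the pendant
  vertex \<open>c\<close> inwards (along \<open>c, e, 0, 5\<close> and from the pendant vertices of \<open>SK\<^sub>1\<^sub>,\<^sub>m\<close>); the
  remaining equation at vertex \<open>5\<close> is \<open>q(\<mu>) = 0\<close>. The divisions by \<open>\<mu>\<^sup>2 - 1\<close> are harmless:
  for \<open>m > 0\<close> no root of \<open>q\<close> satisfies \<open>\<mu>\<^sup>2 = 1\<close>.\<close>

definition sym_vec :: "nat \<Rightarrow> complex \<Rightarrow> nat \<Rightarrow> complex" where
  "sym_vec m \<mu> x =
    (if x = 3 \<or> x = 4 then 1 else if x = 1 \<or> x = 2 then \<mu> else if x = 0 then \<mu>\<^sup>2 - 1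
     else if x = 5 then \<mu> ^ 3 - 3 * \<mu> else if x < 6 + m then \<mu> * (\<mu> ^ 3 - 3 * \<mu>) / (\<mu>\<^sup>2 - 1)
     else (\<mu> ^ 3 - 3 * \<mu>) / (\<mu>\<^sup>2 - 1))"

lemma sym_vec_eigenvector:
  assumes q: "q_root m \<mu>" and \<mu>: "\<mu>\<^sup>2 \<noteq> 1"
  shows "adj_eigenvector (T2_size m) (T2_edge m) \<mu> (sym_vec m \<mu>)"
proof (rule T2_eigenvectorI)
  fix y
  assume y: "y < T2_size m"
  have d: "\<mu>\<^sup>2 - 1 \<noteq> 0"
    using \<mu> by simp
  from y show "T2_nbsum m (sym_vec m \<mu>) y = \<mu> * sym_vec m \<mu> y"
  proof (cases rule: T2_vertex_cases)
    case 6
    have "(\<mu>\<^sup>2 - 1) * (\<mu>\<^sup>2 - 1) + of_nat m * (\<mu> * (\<mu> ^ 3 - 3 * \<mu>)) = \<mu> * (\<mu> ^ 3 - 3 * \<mu>) * (\<mu>\<^sup>2 - 1)"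
      using q unfolding q_root_def by (simp add: algebra_simps power2_eq_square eval_nat_numeral)
    then have "\<mu>\<^sup>2 - 1 + of_nat m * (\<mu> * (\<mu> ^ 3 - 3 * \<mu>) / (\<mu>\<^sup>2 - 1)) = \<mu> * (\<mu> ^ 3 - 3 * \<mu>)"
      using d by (simp add: field_simps)
    moreover have "sum (sym_vec m \<mu>) {6..<6 + m} = of_nat m * (\<mu> * (\<mu> ^ 3 - 3 * \<mu>) / (\<mu>\<^sup>2 - 1))"
      by (simp add: sym_vec_def)
    ultimately show ?thesis
      using 6 by (simp add: T2_nbsum_def sym_vec_def)
  next
    case 7
    have "\<mu> ^ 3 - 3 * \<mu> + (\<mu> ^ 3 - 3 * \<mu>) / (\<mu>\<^sup>2 - 1) = \<mu> * (\<mu> * (\<mu> ^ 3 - 3 * \<mu>) / (\<mu>\<^sup>2 - 1))"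
      using d by (simp add: field_simps) (simp add: algebra_simps power2_eq_square eval_nat_numeral)
    then show ?thesis
      using 7 by (simp add: T2_nbsum_def sym_vec_def)
  qed (auto simp: T2_nbsum_def sym_vec_def algebra_simps power2_eq_square eval_nat_numeral)
qed

lemma T2_class_const_sym_vec: "T2_class_const m (sym_vec m \<mu>)"
  unfolding T2_class_const_def sym_vec_def by auto

text \<open>Multiplied by \<open>\<nu>\<^sup>2 - 1\<close>, the pairing of a class-constant \<open>r\<close> with \<open>sym_vec m \<nu>\<close> is a polynomial
  of degree at most 5 in \<open>\<nu>\<close>, whose coefficients determine the six class values of \<open>r\<close>.\<close>

definition T2_pairing_poly :: "nat \<Rightarrow> (nat \<Rightarrow> complex) \<Rightarrow> complex poly" where
  "T2_pairing_poly m r = [:r 0 - 2 * r 3, 3 * r 5 - 2 * r 1 - 3 * of_nat m * r (6 + m),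
    2 * r 3 - 2 * r 0 - 3 * of_nat m * r 6, 2 * r 1 - 4 * r 5 + of_nat m * r (6 + m), r 0 + of_nat m * r 6, r 5:]"

lemma sym_vec_pairing_poly:
  assumes m: "m > 0" and \<nu>: "\<nu>\<^sup>2 \<noteq> 1" and r: "T2_class_const m r"
  shows "(\<nu>\<^sup>2 - 1) * (\<Sum>x<T2_size m. sym_vec m \<nu> x * r x) = poly (T2_pairing_poly m r) \<nu>"
proof -
  define M :: complex where "M = of_nat m"
  have "(\<Sum>x<T2_size m. sym_vec m \<nu> x * r x) = 2 * r 3 + 2 * \<nu> * r 1 + (\<nu>\<^sup>2 - 1) * r 0
      + (\<nu> ^ 3 - 3 * \<nu>) * r 5 + M * (\<nu> * (\<nu> ^ 3 - 3 * \<nu>) / (\<nu>\<^sup>2 - 1)) * r 6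
      + M * ((\<nu> ^ 3 - 3 * \<nu>) / (\<nu>\<^sup>2 - 1)) * r (6 + m)"
    using m unfolding T2_sum_class_const[OF T2_class_const_mult[OF T2_class_const_sym_vec r]]
    by (simp add: sym_vec_def M_def mult.assoc)
  then have "(\<nu>\<^sup>2 - 1) * (\<Sum>x<T2_size m. sym_vec m \<nu> x * r x)
      = (\<nu>\<^sup>2 - 1) * (2 * r 3 + 2 * \<nu> * r 1 + (\<nu>\<^sup>2 - 1) * r 0 + (\<nu> ^ 3 - 3 * \<nu>) * r 5)
        + M * \<nu> * (\<nu> ^ 3 - 3 * \<nu>) * r 6 + M * (\<nu> ^ 3 - 3 * \<nu>) * r (6 + m)"
    using \<nu> by (simp add: distrib_left)
  also have "\<dots> = poly (T2_pairing_poly m r) \<nu>"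
    by (simp add: T2_pairing_poly_def M_def algebra_simps power2_eq_square eval_nat_numeral)
  finally show ?thesis .
qed

lemma T2_pairing_poly_eq_0:
  assumes m: "m > 0" and r: "T2_class_const m r" and h: "T2_pairing_poly m r = 0" and x: "x < T2_size m"
  shows "r x = 0"
proof -
  define M :: complex where "M = of_nat m"
  have "coeff (T2_pairing_poly m r) i = 0" for i
    using h by simp
  from this[of 0] this[of 1] this[of 2] this[of 3] this[of 4] this[of 5]
  have h: "r 0 - 2 * r 3 = 0" "3 * r 5 - 2 * r 1 - 3 * M * r (6 + m) = 0" "2 * r 3 - 2 * r 0 - 3 * M * r 6 = 0"
    "2 * r 1 - 4 * r 5 + M * r (6 + m) = 0" "r 0 + M * r 6 = 0" "r 5 = 0"
    by (simp_all add: T2_pairing_poly_def M_def eval_nat_numeral)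
  have "M \<noteq> 0"
    using m by (simp add: M_def)
  have "(3 * r 5 - 2 * r 1 - 3 * M * r (6 + m)) + (2 * r 1 - 4 * r 5 + M * r (6 + m)) = 0"
    using h(2,4) by simp
  then have "M * r (6 + m) = 0"
    using h(6) by (simp add: algebra_simps)
  then have "r (6 + m) = 0" "r 1 = 0"
    using h(4,6) \<open>M \<noteq> 0\<close> by simp_all
  have "(2 * r 3 - 2 * r 0 - 3 * M * r 6) + 3 * (r 0 + M * r 6) = 0"
    using h(3,5) by simp
  then have "r 3 = 0"
    using h(1) by (simp add: algebra_simps)
  then have "r 0 = 0" "r 6 = 0"
    using h(1,5) \<open>M \<noteq> 0\<close> by simp_all
  from x show ?thesis
  proof (cases rule: T2_vertex_cases)
    case 7
    then show ?thesis
      using r \<open>r 6 = 0\<close> unfolding T2_class_const_def by (metis add_diff_inverse_nat add_less_cancel_left not_less)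
  next
    case 8
    then show ?thesis
      using r \<open>r (6 + m) = 0\<close> unfolding T2_class_const_def
      by (metis add_diff_inverse_nat add_less_cancel_left mult_2 not_less add.assoc)
  qed (use r h(6) \<open>r 0 = 0\<close> \<open>r 1 = 0\<close> \<open>r 3 = 0\<close> in \<open>simp_all add: T2_class_const_def\<close>)
qed

lemma sym_vec_pairing_eq_0:
  assumes m: "m > 0" and R: "finite R" "card R = 6" "\<And>\<nu>. \<nu> \<in> R \<Longrightarrow> \<nu>\<^sup>2 \<noteq> 1"
    and r: "T2_class_const m r"
    and orth: "\<And>\<nu>. \<nu> \<in> R \<Longrightarrow> (\<Sum>x<T2_size m. sym_vec m \<nu> x * r x) = 0"
    and x: "x < T2_size m"
  shows "r x = 0"
proof (rule T2_pairing_poly_eq_0[OF m r _ x])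
  show "T2_pairing_poly m r = 0"
  proof (rule poly_eq_0_of_roots[OF R(1)])
    show "degree (T2_pairing_poly m r) < card R"
      using R(2) by (simp add: T2_pairing_poly_def)
    show "poly (T2_pairing_poly m r) \<nu> = 0" if "\<nu> \<in> R" for \<nu>
      using sym_vec_pairing_poly[OF m R(3)[OF that] r] orth[OF that] by simp
  qed
qed

definition sym_norm :: "nat \<Rightarrow> complex \<Rightarrow> complex" where
  "sym_norm m \<mu> = (\<Sum>x<T2_size m. (sym_vec m \<mu> x)\<^sup>2)"

lemma sym_norm_nonzero:
  assumes "\<mu> \<in> \<real>"
  shows "sym_norm m \<mu> \<noteq> 0"
proof -
  have real: "sym_vec m \<mu> x \<in> \<real>" for x
    using assms by (auto simp: sym_vec_def)
  then have "sym_norm m \<mu> = of_real (\<Sum>x<T2_size m. (Re (sym_vec m \<mu> x))\<^sup>2)"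
    unfolding sym_norm_def by (auto intro!: sum.cong elim!: Reals_cases)
  moreover have "(Re (sym_vec m \<mu> 3))\<^sup>2 \<le> (\<Sum>x<T2_size m. (Re (sym_vec m \<mu> x))\<^sup>2)"
    by (rule member_le_sum) (auto simp: T2_size_def)
  moreover have "Re (sym_vec m \<mu> 3) = 1"
    by (simp add: sym_vec_def)
  ultimately show ?thesis
    by (metis of_real_eq_0_iff not_one_le_zero power_one)
qed

lemma sym_vec_pairing_expansion:
  assumes m: "m > 0" and R: "finite R" "\<And>\<mu>. \<mu> \<in> R \<Longrightarrow> q_root m \<mu> \<and> \<mu> \<in> \<real>" and \<nu>: "\<nu> \<in> R"
  shows "(\<Sum>x<T2_size m. sym_vec m \<nu> x * (\<Sum>\<mu>\<in>R. sym_vec m \<mu> x / sym_norm m \<mu>)) = 1"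
proof -
  have "(\<Sum>x<T2_size m. sym_vec m \<nu> x * (\<Sum>\<mu>\<in>R. sym_vec m \<mu> x / sym_norm m \<mu>))
      = (\<Sum>\<mu>\<in>R. (\<Sum>x<T2_size m. sym_vec m \<nu> x * sym_vec m \<mu> x) / sym_norm m \<mu>)"
    by (simp add: sum_distrib_left sum_divide_distrib mult_ac) (rule sum.swap)
  also have "\<dots> = (\<Sum>\<mu>\<in>R. if \<mu> = \<nu> then 1 else 0)"
  proof (intro sum.cong refl)
    fix \<mu>
    assume \<mu>: "\<mu> \<in> R"
    show "(\<Sum>x<T2_size m. sym_vec m \<nu> x * sym_vec m \<mu> x) / sym_norm m \<mu> = (if \<mu> = \<nu> then 1 else 0)"
    proof (cases "\<mu> = \<nu>")
      case True
      then show ?thesis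
        using sym_norm_nonzero R(2)[OF \<mu>] by (simp add: sym_norm_def power2_eq_square)
    next
      case False
      have "(\<Sum>x<T2_size m. sym_vec m \<nu> x * sym_vec m \<mu> x) = 0"
        using R(2) m \<mu> \<nu> False
        by (intro adj_eigenvectors_orthogonal[where E = "T2_edge m" and c = \<nu> and d = \<mu>, OF T2_edge_sym]
            sym_vec_eigenvector) (auto simp: q_root_square_ne_1)
      then show ?thesis
        using False by simp
    qed
  qed
  also have "\<dots> = 1"
    using R(1) \<nu> by simp
  finally show ?thesis .
qed

text \<open>The six eigenvectors \<open>sym_vec m \<mu>\<close> are orthogonal, so \<open>r\<close> below, the difference of
  \<open>(e\<^sub>c + e\<^sub>d)/2\<close> and its orthogonal projection on their span, is orthogonal to all of them;
  being class-constant, it vanishes.\<close>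

lemma sym_vec_expansion:
  assumes m: "m > 0" and R: "finite R" "card R = 6" "\<And>\<mu>. \<mu> \<in> R \<Longrightarrow> q_root m \<mu> \<and> \<mu> \<in> \<real>"
    and y: "y < T2_size m"
  shows "(\<Sum>\<mu>\<in>R. sym_vec m \<mu> y / sym_norm m \<mu>) = (if y = 3 \<or> y = 4 then 1 / 2 else 0)"
proof -
  define r where "r x = (if x = 3 \<or> x = 4 then 1 / 2 else 0) - (\<Sum>\<mu>\<in>R. sym_vec m \<mu> x / sym_norm m \<mu>)" for x
  have "r y = 0"
  proof (rule sym_vec_pairing_eq_0[OF m R(1,2) _ _ _ y])
    show "\<nu>\<^sup>2 \<noteq> 1" if "\<nu> \<in> R" for \<nu>
      using R(3)[OF that] m by (simp add: q_root_square_ne_1)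
    show "T2_class_const m r"
      by (simp add: T2_class_const_def r_def sym_vec_def)
    show "(\<Sum>x<T2_size m. sym_vec m \<nu> x * r x) = 0" if "\<nu> \<in> R" for \<nu>
    proof -
      have "(\<Sum>x<T2_size m. sym_vec m \<nu> x * (if x = 3 \<or> x = 4 then 1 / 2 else 0)) = 1"
        by (simp add: T2_sum_classes sym_vec_def)
      then show ?thesis
        using sym_vec_pairing_expansion[OF m R(1,3) that] by (simp add: r_def right_diff_distrib sum_subtractf)
    qed
  qed
  then show ?thesis
    by (simp add: r_def)
qed

definition T2_component :: "nat \<Rightarrow> complex set \<Rightarrow> complex \<Rightarrow> nat \<Rightarrow> complex" where
  "T2_component m R j x =
    (if j \<in> R then inverse (sym_norm m j) * sym_vec m j x else inverse 4 * antisym_vec j x)"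

lemma T2_component_eigenvector:
  assumes m: "m > 0" and R: "\<And>\<mu>. \<mu> \<in> R \<Longrightarrow> q_root m \<mu> \<and> \<mu> \<in> \<real>"
    and j: "j \<in> insert 1 (insert (-1) R)"
  shows "adj_eigenvector (T2_size m) (T2_edge m) j (T2_component m R j)"
proof (cases "j \<in> R")
  case True
  then show ?thesis
    using R m unfolding T2_component_def
    by (simp add: adj_eigenvector_scale sym_vec_eigenvector q_root_square_ne_1)
next
  case False
  then have "j\<^sup>2 = 1"
    using j by auto
  moreover have "T2_component m R j = (\<lambda>x. inverse 4 * antisym_vec j x)"
    using False by (simp add: T2_component_def fun_eq_iff)
  ultimately show ?thesis
    by (simp only: adj_eigenvector_scale antisym_vec_eigenvector)
qed

lemma T2_component_expansion:
  assumes m: "m > 0" and R: "finite R" "card R = 6" "\<And>\<mu>. \<mu> \<in> R \<Longrightarrow> q_root m \<mu> \<and> \<mu> \<in> \<real>"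
    and R1: "1 \<notin> R" "-1 \<notin> R" and y: "y < T2_size m"
  shows "(if y = 3 then 1 else 0) = (\<Sum>j\<in>insert 1 (insert (-1) R). T2_component m R j y)"
proof -
  have "(\<Sum>\<mu>\<in>R. T2_component m R \<mu> y) = (\<Sum>\<mu>\<in>R. sym_vec m \<mu> y / sym_norm m \<mu>)"
    by (rule sum.cong) (simp_all add: T2_component_def field_simps)
  then show ?thesis
    using R(1) R1 by (simp add: T2_component_def sym_vec_expansion[OF m R y] antisym_vec_def)
qed

section \<open>Pretty good state transfer in \<open>T\<^sub>2\<^sub>,\<^sub>m\<close>\<close>

lemma T2_pgst_of_phase_limits:
  assumes m: "m > 0" and R: "finite R" "card R = 6" "\<And>\<mu>. \<mu> \<in> R \<Longrightarrow> q_root m \<mu> \<and> \<mu> \<in> \<real>"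
    and \<tau>: "\<And>k. \<tau> k \<in> odd_pi_multiples"
    and lim: "\<And>\<mu>. \<mu> \<in> R \<Longrightarrow> (\<lambda>k. exp (\<i> * of_real (\<tau> k) * \<mu>)) \<longlonglongrightarrow> 1"
  shows "pgst_wrt (T2_size m) (T2_edge m) odd_pi_multiples 3 4"
    and "pgst_wrt (T2_size m) (T2_edge m) odd_pi_multiples 1 2"
proof -
  define J where "J = insert 1 (insert (-1) R)"
  have "\<mu>\<^sup>2 \<noteq> 1" if "\<mu> \<in> R" for \<mu>
    using R(3)[OF that] m by (simp add: q_root_square_ne_1)
  then have R1: "1 \<notin> R" "-1 \<notin> R"
    by (metis one_power2, metis power2_minus one_power2)
  have J: "finite J" "{1, -1} \<subseteq> J"
    using R(1) by (auto simp: J_def)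
  note eig = T2_component_eigenvector[OF m R(3), folded J_def]
  note dec = T2_component_expansion[OF m R R1, folded J_def]
  have lim_J: "(\<lambda>k. exp (\<i> * of_real (\<tau> k) * j)) \<longlonglongrightarrow> (if j \<in> {1, -1} then -1 else 1)"
    if "j \<in> J" for j
    using that R1 lim exp_odd_pi_multiple[OF \<tau>] by (auto simp: J_def)
  have n: "1 < T2_size m" "2 < T2_size m" "3 < T2_size m" "4 < T2_size m"
    by (simp_all add: T2_size_def)
  show "pgst_wrt (T2_size m) (T2_edge m) odd_pi_multiples 3 4"
    by (rule pgst_wrt_of_eigen_expansion[OF _ n(3,4) J eig dec _ \<tau> lim_J])
      (auto simp: T2_component_def R1 antisym_vec_def J_def)
  have dec_e: "(if y = 1 then 1 else 0) = (\<Sum>j\<in>J. j * T2_component m R j y)" if "y < T2_size m" for y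
    by (rule eigen_expansion_pendant_neighbour[OF eig dec n(3) _ that])
      (auto simp: adj_mat_def T2_edge_def T2_edge0_iff J_def)
  show "pgst_wrt (T2_size m) (T2_edge m) odd_pi_multiples 1 2"
    by (rule pgst_wrt_of_eigen_expansion[OF _ n(1,2) J adj_eigenvector_scale[OF eig] dec_e _ \<tau> lim_J])
      (auto simp: T2_component_def R1 antisym_vec_def J_def)
qed

lemma T2_pgst_irreducible:
  assumes m: "m > 0" and irr: "irreducible (q_poly m)"
  shows "pgst_wrt (T2_size m) (T2_edge m) odd_pi_multiples vc vd \<and>
    pgst_wrt (T2_size m) (T2_edge m) odd_pi_multiples ve vf"
proof -
  obtain \<theta>1 \<theta>2 \<theta>3 :: real and \<tau> where \<theta>: "0 < \<theta>1" "\<theta>1 < 1" "1 < \<theta>2" "\<theta>2 < \<theta>3"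
    and roots: "\<And>x. x \<in> {\<theta>1, \<theta>2, \<theta>3} \<Longrightarrow> poly (map_poly of_rat (q_poly m)) x = 0"
    and \<tau>: "\<And>k. \<tau> k \<in> odd_pi_multiples"
    and lim: "\<And>x. x \<in> {\<theta>1, \<theta>2, \<theta>3} \<Longrightarrow> (\<lambda>k. exp (\<i> * of_real (\<tau> k) * of_real x)) \<longlonglongrightarrow> 1"
    using q_irreducible_kronecker_phases[OF m irr] by blast
  define R :: "complex set" where "R = of_real ` {\<theta>1, \<theta>2, \<theta>3, -\<theta>1, -\<theta>2, -\<theta>3}"
  have R: "finite R" "card R = 6"
    using \<theta> unfolding R_def by (simp_all add: card_image inj_on_def card_insert_if)
  have "q_root m (of_real x)" if "x \<in> {\<theta>1, \<theta>2, \<theta>3}" for x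
    using roots[OF that] by (simp add: q_root_of_real_iff)
  then have R_roots: "q_root m \<mu> \<and> \<mu> \<in> \<real>" if "\<mu> \<in> R" for \<mu>
    using that unfolding R_def by (auto simp: q_root_uminus)
  have R_lim: "(\<lambda>k. exp (\<i> * of_real (\<tau> k) * \<mu>)) \<longlonglongrightarrow> 1" if "\<mu> \<in> R" for \<mu>
    using that lim tendsto_exp_phase_uminus[OF lim] unfolding R_def by auto
  show ?thesis
    using T2_pgst_of_phase_limits[OF m R R_roots \<tau> R_lim] by (simp add: vc_def vd_def ve_def vf_def)
qed

lemma T2_pgst_target_twin:
  assumes m: "m > 0" and \<theta>: "q_root m \<theta>" and a: "a \<in> {1, 2, 3, 4}" and "a \<noteq> b"
    and an: "a < T2_size m" and bn: "b < T2_size m"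
    and lim: "\<And>x. x < T2_size m \<Longrightarrow>
      (\<lambda>k. transfer (T2_size m) (T2_edge m) (\<tau> k) x a) \<longlonglongrightarrow> (if x = b then \<gamma> else 0)"
  shows "{a, b} = {3, 4} \<or> {a, b} = {1, 2}"
proof (rule ccontr)
  assume not_twin: "\<not> ({a, b} = {3, 4} \<or> {a, b} = {1, 2})"
  note pair = pgst_eigen_pair[OF T2_edge_sym _ _ an bn lim]
  have antisym: "antisym_vec 1 a * antisym_vec (-1) a = \<gamma>\<^sup>2 * (antisym_vec 1 b * antisym_vec (-1) b)"
    by (rule pair[where c = 1]) (simp_all add: antisym_vec_eigenvector)
  have sym: "sym_vec m \<theta> a * sym_vec m (- \<theta>) a = \<gamma>\<^sup>2 * (sym_vec m \<theta> b * sym_vec m (- \<theta>) b)"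
    using \<theta> m by (intro pair[where c = \<theta>] sym_vec_eigenvector) (simp_all add: q_root_uminus q_root_square_ne_1)
  have "\<theta> \<noteq> 0" "\<theta>\<^sup>2 \<noteq> 1"
    using \<theta> m by (simp_all add: q_root_nonzero q_root_square_ne_1)
  consider "b \<notin> {1, 2, 3, 4}" | "a \<in> {3, 4} \<and> b \<in> {1, 2}" | "a \<in> {1, 2} \<and> b \<in> {3, 4}"
    using a \<open>a \<noteq> b\<close> not_twin by auto
  then show False
  proof cases
    case 1
    then show False
      using a antisym by (auto simp: antisym_vec_def)
  next
    case 2
    then have "\<gamma>\<^sup>2 = -1"
      using antisym by (auto simp: antisym_vec_def minus_equation_iff[of "\<gamma>\<^sup>2"])
    then show False
      using 2 sym \<open>\<theta> \<noteq> 0\<close> \<open>\<theta>\<^sup>2 \<noteq> 1\<close> by (auto simp: sym_vec_def power2_eq_square)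
  next
    case 3
    then have "\<gamma>\<^sup>2 = -1"
      using antisym by (auto simp: antisym_vec_def minus_equation_iff[of "\<gamma>\<^sup>2"])
    then show False
      using 3 sym \<open>\<theta> \<noteq> 0\<close> \<open>\<theta>\<^sup>2 \<noteq> 1\<close> by (auto simp: sym_vec_def power2_eq_square)
  qed
qed

lemma T2_pgst_twin_phases:
  assumes m: "m > 0" and twin: "{a, b} = {3, 4} \<or> {a, b} = {1, 2}"
    and lim: "\<And>x. x < T2_size m \<Longrightarrow>
      (\<lambda>k. transfer (T2_size m) (T2_edge m) (\<tau> k) x a) \<longlonglongrightarrow> (if x = b then \<gamma> else 0)"
  shows "\<gamma>\<^sup>2 = 1"
    and "\<And>\<theta>. q_root m \<theta> \<Longrightarrow> (\<lambda>k. exp (\<i> * of_real (\<tau> k) * \<theta>)) \<longlonglongrightarrow> \<gamma>"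
    and "(\<lambda>k. exp (\<i> * of_real (\<tau> k))) \<longlonglongrightarrow> - \<gamma>"
proof -
  have an: "a < T2_size m" and bn: "b < T2_size m"
    using twin by (auto simp: T2_size_def doubleton_eq_iff)
  note limit = pgst_eigen_limit[OF T2_edge_sym _ an bn lim]
  have "antisym_vec 1 a * antisym_vec (-1) a = \<gamma>\<^sup>2 * (antisym_vec 1 b * antisym_vec (-1) b)"
    by (rule pgst_eigen_pair[OF T2_edge_sym _ _ an bn lim, where c = 1]) (simp_all add: antisym_vec_eigenvector)
  then show "\<gamma>\<^sup>2 = 1"
    using twin by (auto simp: antisym_vec_def doubleton_eq_iff)
  show "(\<lambda>k. exp (\<i> * of_real (\<tau> k) * \<theta>)) \<longlonglongrightarrow> \<gamma>" if "q_root m \<theta>" for \<theta>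
  proof -
    have "(\<lambda>k. exp (\<i> * of_real (\<tau> k) * \<theta>) * sym_vec m \<theta> a) \<longlonglongrightarrow> \<gamma> * sym_vec m \<theta> b"
      using that m by (intro limit sym_vec_eigenvector) (simp_all add: q_root_square_ne_1)
    moreover have "sym_vec m \<theta> b = sym_vec m \<theta> a" "sym_vec m \<theta> a \<noteq> 0"
      using twin q_root_nonzero[OF that] by (auto simp: sym_vec_def doubleton_eq_iff)
    ultimately show ?thesis
      by simp
  qed
  have "(\<lambda>k. exp (\<i> * of_real (\<tau> k) * 1) * antisym_vec 1 a) \<longlonglongrightarrow> \<gamma> * antisym_vec 1 b"
    by (intro limit antisym_vec_eigenvector) simp
  moreover have "antisym_vec 1 b = - antisym_vec 1 a" "antisym_vec 1 a \<noteq> 0"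
    using twin by (auto simp: antisym_vec_def doubleton_eq_iff)
  ultimately have "(\<lambda>k. exp (\<i> * of_real (\<tau> k)) * antisym_vec 1 a) \<longlonglongrightarrow> - \<gamma> * antisym_vec 1 a"
    by simp
  then show "(\<lambda>k. exp (\<i> * of_real (\<tau> k))) \<longlonglongrightarrow> - \<gamma>"
    using \<open>antisym_vec 1 a \<noteq> 0\<close> tendsto_mult_right_iff by blast
qed

lemma T2_no_pgst_odd_root_sum:
  fixes \<theta>1 \<theta>2 \<theta>3 :: complex and N :: int
  assumes m: "m > 0" and roots: "q_root m \<theta>1" "q_root m \<theta>2" "q_root m \<theta>3"
    and "odd N" and sum: "\<theta>1 + \<theta>2 + \<theta>3 = of_int N"
    and a: "a \<in> {1, 2, 3, 4}"
  shows "\<not> pgst (T2_size m) (T2_edge m) a b"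
proof
  assume "pgst (T2_size m) (T2_edge m) a b"
  then obtain \<tau> \<gamma> where "a \<noteq> b" and an: "a < T2_size m" and bn: "b < T2_size m"
    and lim: "\<And>x. x < T2_size m \<Longrightarrow>
      (\<lambda>k. transfer (T2_size m) (T2_edge m) (\<tau> k) x a) \<longlonglongrightarrow> (if x = b then \<gamma> else 0)"
    unfolding pgst_def pgst_wrt_def by blast
  have "{a, b} = {3, 4} \<or> {a, b} = {1, 2}"
    by (rule T2_pgst_target_twin[OF m roots(1) a \<open>a \<noteq> b\<close> an bn lim])
  then have "\<gamma>\<^sup>2 = 1" and phase: "\<And>\<theta>. q_root m \<theta> \<Longrightarrow> (\<lambda>k. exp (\<i> * of_real (\<tau> k) * \<theta>)) \<longlonglongrightarrow> \<gamma>"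
    and "(\<lambda>k. exp (\<i> * of_real (\<tau> k))) \<longlonglongrightarrow> - \<gamma>"
    using T2_pgst_twin_phases[OF m _ lim] by blast+
  then show False
    using odd_sum_exp_limits_contradiction[OF phase[OF roots(1)] phase[OF roots(2)] phase[OF roots(3)]]
      \<open>odd N\<close> sum by blast
qed

lemma T2_reducible_case:
  fixes f :: "rat poly" and \<theta>1 \<theta>2 \<theta>3 :: complex
  assumes m: "m > 0" and f: "lead_coeff f = 1" "degree f = 3" "q_poly m = - (f * pcompose f [:0, -1:])"
    and roots: "map_poly of_rat f = [:-\<theta>1, 1:] * [:-\<theta>2, 1:] * [:-\<theta>3, 1:]"
  shows "\<not> (\<exists>k::int. \<theta>1 + \<theta>2 + \<theta>3 = of_int (2 * k))"
    and "(\<exists>k::int. \<theta>1 + \<theta>2 + \<theta>3 = of_int (2 * k + 1)) \<Longrightarrow>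
      \<forall>a\<in>{vc, vd, ve, vf}. \<forall>b. \<not> pgst (T2_size m) (T2_edge m) a b"
proof -
  note q = q_poly_cubic_factor_roots[OF f roots]
  show "\<not> (\<exists>k::int. \<theta>1 + \<theta>2 + \<theta>3 = of_int (2 * k))"
    using q(4) by blast
  show "\<forall>a\<in>{vc, vd, ve, vf}. \<forall>b. \<not> pgst (T2_size m) (T2_edge m) a b"
    if odd_sum: "\<exists>k::int. \<theta>1 + \<theta>2 + \<theta>3 = of_int (2 * k + 1)"
  proof (intro ballI allI)
    fix a b
    assume "a \<in> {vc, vd, ve, vf}"
    then have a: "a \<in> {1, 2, 3, 4}"
      by (auto simp: vc_def vd_def ve_def vf_def)
    obtain k :: int where k: "\<theta>1 + \<theta>2 + \<theta>3 = of_int (2 * k + 1)"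
      using odd_sum by blast
    show "\<not> pgst (T2_size m) (T2_edge m) a b"
      by (rule T2_no_pgst_odd_root_sum[OF m q(1-3) _ k a]) simp
  qed
qed

theorem theorem3p3:
  fixes m :: nat
  assumes "m > 0"
  shows
   "(irreducible (q_poly m) \<longrightarrow>
       pgst_wrt (T2_size m) (T2_edge m) odd_pi_multiples vc vd \<and>
       pgst_wrt (T2_size m) (T2_edge m) odd_pi_multiples ve vf)
    \<and>
    (\<forall>(f :: rat poly) (\<theta>1::complex) \<theta>2 \<theta>3.
       \<not> irreducible (q_poly m) \<and> irreducible f \<and> lead_coeff f = 1 \<and> degree f = 3 \<and>
       q_poly m = - (f * pcompose f [:0, -1:]) \<and>
       map_poly of_rat f = [:-\<theta>1, 1:] * [:-\<theta>2, 1:] * [:-\<theta>3, 1:] \<longrightarrow>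
         ((\<exists>k::int. \<theta>1 + \<theta>2 + \<theta>3 = of_int (2 * k)) \<longrightarrow>
            pgst_wrt (T2_size m) (T2_edge m) odd_pi_multiples vc vd \<and>
            pgst_wrt (T2_size m) (T2_edge m) odd_pi_multiples ve vf) \<and>
         ((\<exists>k::int. \<theta>1 + \<theta>2 + \<theta>3 = of_int (2 * k + 1)) \<longrightarrow>
            (\<forall>a\<in>{vc, vd, ve, vf}. \<forall>b. \<not> pgst (T2_size m) (T2_edge m) a b)))"
  using T2_pgst_irreducible[OF assms] T2_reducible_case[OF assms] by blast

end
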